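(* Let $K$ be a field with a non-Archimedean valuation $\mathrm{val}:K\to\mathbb{T}$, let $n\ge1$, let $Q=(V,A,s,t)$ be a finite quiver and $R$ a $Q$-representation with $R_i=K^n$ for all $i\in V$, where each arrow $\alpha$ is represented by a weakly monomial matrix $A^{\alpha}\in K^{n\times n}$. Let $\mathbf{d}=(d_i)_{i\in V}$ with $0\le d_i\le n$ and let $\boldsymbol{\mu}=(\mu_i)_{i\in V}$ be valuated matroids on $[n]$ with $\mu_i$ of rank $d_i$. Then the following are equivalent: (a) $\boldsymbol{\mu}\in\operatorname{QDr}(R,\mathbf{d};n)$; (b) $\mathrm{val}(A^{\alpha})\odot\overline{\operatorname{trop}}(\mu_{s(\alpha)})\subseteq\overline{\operatorname{trop}}(\mu_{t(\alpha)})$ for all $\alpha\in A$; (c) for every arrow $\alpha$, the map $f_\alpha$ associated to $A^\alpha$ is a (contravariant) affine morphism of valuated matroids from $\mu_{t(\alpha)}$ to $\mu_{s(\alpha)}$, i.e. $f_\alpha^{-1}(\mu_{s(\alpha)})\twoheadleftarrow(\mu_{t(\alpha)})_o$.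
   Context: Tropical conventions: $\mathbb{T}=\mathbb{R}\cup\{\infty\}$, $a\oplus b=\min$, $a\odot b=a+b$, $\mathbb{P}(\mathbb{T}^N)=(\mathbb{T}^N\setminus\{(\infty,\dots,\infty)\})/\mathbb{R}\mathbf{1}$; $\mathrm{val}(0)=\infty$; for a matrix $M$, $(\mathrm{val}(M)\odot v)_i=\min_j(\mathrm{val}(M_{ij})+v_j)$, applied pointwise to sets. Valuated matroid of rank $r$ on a finite set $E$: $\nu:\binom{E}{r}\to\mathbb{T}$, not identically $\infty$, such that for all $I,J\in\binom{E}{r}$, $i\in I\setminus J$ there is $j\in J\setminus I$ with $\nu(I)+\nu(J)\ge\nu((I\setminus i)\cup j)+\nu((J\setminus j)\cup i)$; considered up to additive constants. Convention: $\nu(S)=\infty$ if $|S|\ne r$. Tropical linear space $\overline{\operatorname{trop}}(\nu)\subseteq\mathbb{P}(\mathbb{T}^E)$: the set of $x$ such that for each $I\in\binom{E}{r+1}$ with $C_\nu(I)\ne(\infty,\dots)$ (where $C_\nu(I)_e=\nu(I\setminus e)$ for $e\in I$, $\infty$ else), $\min_e(C_\nu(I)_e+x_e)$ is attained at least twice ($\infty$ counts as twice). Quotient: for $\mu,\nu$ on $E$ of ranks $r\le s$, $\mu\twoheadleftarrow\nu$ if for all $I\in\binom{E}{r}$, $J\in\binom{E}{s}$, $i\in I\setminus J$ there is $j\in J\setminus I$ with $\mu(I)+\nu(J)\ge\mu(I\cup j\setminus i)+\nu(J\cup i\setminus j)$. Pointed matroid: for $\nu$ on $[n]$, $\nu_o$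 on $[n]\cup\{o\}$ agrees with $\nu$ on sets avoiding $o$ and is $\infty$ on sets containing $o$ (so $o$ is a loop). For $f=(f_1,f_2):[n]\cup\{o\}\to([n]\cup\{o\})\times\mathbb{T}$ with $S=f_1([n]\cup\{o\})$, let $\nu_o|_S$ be the restriction of the valuated matroid $\nu_o$ to $S$, of rank $r'$. The affine induced valuated matroid is $f^{-1}(\nu)(B)=\nu_o|_S(f_1(B))+\sum_{i\in B}f_2(i)$ for $B\subseteq[n]\cup\{o\}$, $|B|=r'$ (value $\infty$ if $|f_1(B)|<r'$). $f$ is an affine morphism of valuated matroids from $\mu$ to $\nu$ if $f^{-1}(\nu)\twoheadleftarrow\mu_o$. A matrix is weakly monomial if each row has at most one nonzero entry. The map associated to a weakly monomial $M\in K^{n\times n}$ is $f(o)=(o,\infty)$, $f(i)=(o,\infty)$ if row $i$ is zero, and $f(i)=(j,\mathrm{val}(M_{ij}))$ if $M_{ij}\ne0$. Quiver Dressian $\operatorname{QDr}(R,\mathbf{d};n)$: tuples $(p^{(i)})_{i\in V}$, $p^{(i)}\in\mathbb{P}(\mathbb{T}^{\binom{n}{d_i}})$, such that for each vertex $i$ ($r=d_i$) and $I\in\binom{[n]}{r-1}$, $J\in\binom{[n]}{r+1}$, $\min_{j\in J\setminus I}(p^{(i)}_{I\cup j}+p^{(i)}_{J\setminus j})$ is attained at least twice, and for each arrow $\alpha$ ($r=d_{s(\alpha)}$, $s=d_{t(\alpha)}$) and $I\in\binom{[n]}{r-1}$, $J\in\binom{[n]}{s+1}$, $\min_{j\in[n]\setminus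 I,i\in J}(\mathrm{val}(A^\alpha_{i,j})+p^{(s(\alpha))}_{I\cup j}+p^{(t(\alpha))}_{J\setminus i})$ is attained at least twice ($\infty$ counts as twice). *)

theory Defs
  imports "HOL-Library.Extended_Real"
begin

text \<open>Tropical numbers T = R \<union> {\<infinity>} are represented by extended reals that are never
  \<open>-\<infinity>\<close>; tropical addition is \<open>min\<close>, tropical multiplication is \<open>+\<close>.
  The ground set [n] is {1..n}; the extra point o of pointed matroids is 0.\<close>

definition min_twice :: "'b set \<Rightarrow> ('b \<Rightarrow> ereal) \<Rightarrow> bool" where
  "min_twice S g \<longleftrightarrow> (\<forall>k\<in>S. g k = \<infinity>) \<or>
     (\<exists>a\<in>S. \<exists>b\<in>S. a \<noteq> b \<and> g a = g b \<and> (\<forall>k\<in>S. g a \<le> g k))"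

definition valuation :: "('k::field \<Rightarrow> ereal) \<Rightarrow> bool" where
  "valuation v \<longleftrightarrow> v 0 = \<infinity> \<and> (\<forall>x. x \<noteq> 0 \<longrightarrow> v x \<noteq> \<infinity> \<and> v x \<noteq> -\<infinity>) \<and>
     (\<forall>x y. v (x * y) = v x + v y) \<and> (\<forall>x y. min (v x) (v y) \<le> v (x + y))"

definition valuated_matroid :: "'e set \<Rightarrow> nat \<Rightarrow> ('e set \<Rightarrow> ereal) \<Rightarrow> bool" where
  "valuated_matroid E r \<nu> \<longleftrightarrow> finite E \<and> (\<forall>S. \<nu> S \<noteq> -\<infinity>) \<and>
     (\<forall>S. \<not> (S \<subseteq> E \<and> card S = r) \<longrightarrow> \<nu> S = \<infinity>) \<and> (\<exists>B. \<nu> B \<noteq> \<infinity>) \<and>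
     (\<forall>I J i. I \<subseteq> E \<and> card I = r \<and> J \<subseteq> E \<and> card J = r \<and> i \<in> I - J \<longrightarrow>
        (\<exists>j\<in>J - I. \<nu> I + \<nu> J \<ge> \<nu> (insert j (I - {i})) + \<nu> (insert i (J - {j}))))"

text \<open>Tropical linear space, as the set of representatives x : E \<rightarrow> T (not all \<infinity>;
  normalised to \<infinity> outside E) of points of P(T^E). The defining condition is
  invariant under adding constants, so this is the preimage of the projective set.\<close>
definition trop_space :: "'e set \<Rightarrow> nat \<Rightarrow> ('e set \<Rightarrow> ereal) \<Rightarrow> ('e \<Rightarrow> ereal) set" where
  "trop_space E r \<nu> = {x. (\<forall>e. x e \<noteq> -\<infinity>) \<and> (\<forall>e. e \<notin> E \<longrightarrow> x e = \<infinity>) \<and> (\<exists>e\<in>E. x e \<noteq> \<infinity>) \<and>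
     (\<forall>I. I \<subseteq> E \<and> card I = Suc r \<and> (\<exists>e\<in>I. \<nu> (I - {e}) \<noteq> \<infinity>) \<longrightarrow>
        min_twice I (\<lambda>e. \<nu> (I - {e}) + x e))}"

definition trop_mat_vec :: "('k \<Rightarrow> ereal) \<Rightarrow> nat \<Rightarrow> (nat \<Rightarrow> nat \<Rightarrow> 'k) \<Rightarrow> (nat \<Rightarrow> ereal) \<Rightarrow> nat \<Rightarrow> ereal" where
  "trop_mat_vec val n M x = (\<lambda>i. if i \<in> {1..n} then (INF j\<in>{1..n}. val (M i j) + x j) else \<infinity>)"

definition weakly_monomial :: "nat \<Rightarrow> (nat \<Rightarrow> nat \<Rightarrow> 'k::zero) \<Rightarrow> bool" where
  "weakly_monomial n M \<longleftrightarrow>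
     (\<forall>i\<in>{1..n}. \<forall>j\<in>{1..n}. \<forall>k\<in>{1..n}. M i j \<noteq> 0 \<and> M i k \<noteq> 0 \<longrightarrow> j = k)"

definition QDr :: "('k::field \<Rightarrow> ereal) \<Rightarrow> nat \<Rightarrow> 'v set \<Rightarrow> 'a set \<Rightarrow> ('a \<Rightarrow> 'v) \<Rightarrow> ('a \<Rightarrow> 'v)
    \<Rightarrow> ('a \<Rightarrow> nat \<Rightarrow> nat \<Rightarrow> 'k) \<Rightarrow> ('v \<Rightarrow> nat) \<Rightarrow> ('v \<Rightarrow> nat set \<Rightarrow> ereal) \<Rightarrow> bool" where
  "QDr val n V Arr s t A d p \<longleftrightarrow>
     (\<forall>i\<in>V. (\<forall>S. p i S \<noteq> -\<infinity>) \<and> (\<forall>S. \<not> (S \<subseteq> {1..n} \<and> card S = d i) \<longrightarrow> p i S = \<infinity>) \<and>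
        (\<exists>S. p i S \<noteq> \<infinity>)) \<and>
     (\<forall>i\<in>V. \<forall>I J. 1 \<le> d i \<and> I \<subseteq> {1..n} \<and> card I = d i - 1 \<and> J \<subseteq> {1..n} \<and> card J = d i + 1 \<longrightarrow>
        min_twice (J - I) (\<lambda>j. p i (insert j I) + p i (J - {j}))) \<and>
     (\<forall>\<alpha>\<in>Arr. \<forall>I J. 1 \<le> d (s \<alpha>) \<and> I \<subseteq> {1..n} \<and> card I = d (s \<alpha>) - 1 \<and>
        J \<subseteq> {1..n} \<and> card J = d (t \<alpha>) + 1 \<longrightarrow>
        min_twice (({1..n} - I) \<times> J)
          (\<lambda>(j, i). val (A \<alpha> i j) + p (s \<alpha>) (insert j I) + p (t \<alpha>) (J - {i})))"

definition pointed :: "(nat set \<Rightarrow> ereal) \<Rightarrow> nat set \<Rightarrow> ereal" where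
  "pointed \<nu> = (\<lambda>S. if 0 \<in> S then \<infinity> else \<nu> S)"

definition restr_rank :: "'e set \<Rightarrow> ('e set \<Rightarrow> ereal) \<Rightarrow> 'e set \<Rightarrow> nat" where
  "restr_rank E \<nu> S = Max {card (B \<inter> S) | B. B \<subseteq> E \<and> \<nu> B \<noteq> \<infinity>}"

definition restrict_vm :: "'e set \<Rightarrow> ('e set \<Rightarrow> ereal) \<Rightarrow> 'e set \<Rightarrow> 'e set \<Rightarrow> ereal" where
  "restrict_vm E \<nu> S B = (if B \<subseteq> S \<and> card B = restr_rank E \<nu> S
      then (INF C\<in>Pow (E - S). \<nu> (B \<union> C)) else \<infinity>)"

definition assoc_map :: "('k::zero \<Rightarrow> ereal) \<Rightarrow> nat \<Rightarrow> (nat \<Rightarrow> nat \<Rightarrow> 'k) \<Rightarrow> nat \<Rightarrow> nat \<times> ereal" where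
  "assoc_map val n M i = (if i \<in> {1..n} \<and> (\<exists>j\<in>{1..n}. M i j \<noteq> 0)
      then (let j = (THE j. j \<in> {1..n} \<and> M i j \<noteq> 0) in (j, val (M i j)))
      else (0, \<infinity>))"

definition affine_rank :: "('k::zero \<Rightarrow> ereal) \<Rightarrow> nat \<Rightarrow> (nat \<Rightarrow> nat \<Rightarrow> 'k) \<Rightarrow> (nat set \<Rightarrow> ereal) \<Rightarrow> nat" where
  "affine_rank val n M \<nu> =
     restr_rank {0..n} (pointed \<nu>) (fst ` assoc_map val n M ` {0..n})"

definition affine_induced :: "('k::zero \<Rightarrow> ereal) \<Rightarrow> nat \<Rightarrow> (nat \<Rightarrow> nat \<Rightarrow> 'k) \<Rightarrow> (nat set \<Rightarrow> ereal)
    \<Rightarrow> nat set \<Rightarrow> ereal" where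
  "affine_induced val n M \<nu> B =
     (let f = assoc_map val n M; S = fst ` f ` {0..n}; r' = affine_rank val n M \<nu> in
      if B \<subseteq> {0..n} \<and> card B = r' \<and> card (fst ` f ` B) = r'
      then restrict_vm {0..n} (pointed \<nu>) S (fst ` f ` B) + (\<Sum>i\<in>B. snd (f i))
      else \<infinity>)"

definition vm_quotient :: "'e set \<Rightarrow> nat \<Rightarrow> ('e set \<Rightarrow> ereal) \<Rightarrow> nat \<Rightarrow> ('e set \<Rightarrow> ereal) \<Rightarrow> bool" where
  "vm_quotient E r \<mu> s \<nu> \<longleftrightarrow> r \<le> s \<and>
     (\<forall>I J i. I \<subseteq> E \<and> card I = r \<and> J \<subseteq> E \<and> card J = s \<and> i \<in> I - J \<longrightarrow>
        (\<exists>j\<in>J - I. \<mu> I + \<nu> J \<ge> \<mu> (insert j (I - {i})) + \<nu> (insert i (J - {j}))))"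

definition affine_morphism :: "('k::zero \<Rightarrow> ereal) \<Rightarrow> nat \<Rightarrow> (nat \<Rightarrow> nat \<Rightarrow> 'k) \<Rightarrow> nat
    \<Rightarrow> (nat set \<Rightarrow> ereal) \<Rightarrow> (nat set \<Rightarrow> ereal) \<Rightarrow> bool" where
  "affine_morphism val n M r\<mu> \<mu> \<nu> \<longleftrightarrow>
     vm_quotient {0..n} (affine_rank val n M \<nu>) (affine_induced val n M \<nu>) r\<mu> (pointed \<mu>)"

end

(*
  For a weakly monomial matrix, val (M i j) is infinite unless j = col i, so the tropical
  incidence relation of an arrow for (I, J) has only the finite terms
  wt a + P (I + col a) + Q (J - a), a in J: it is a three-term relation in J alone.

  (a) => (b): let x be in trop(P) and K a circuit of Q on which the image of x is finite at a.
  Take a basis B = I + col a of P adapted to x, i.e. x d - x (col a) >= P B - P (I + d) for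
  all d; it exists because exchanging towards col a never increases the x-weight of a basis.
  The relation for (I, K) then yields a second minimiser on K.
  (b) => (a): apply (b) to the cocircuit points e |-> P (I + e).
  The affine induced matroid of f is the restriction of P to the image columns, shifted by
  the weights, and its quotient exchange is the relation above with I completed by columns
  outside the image. So (c) => (b) is the argument of (a) => (b) with a basis adapted
  relative to the image columns, and (a) => (c) holds once this restriction has rank at
  most rank Q, which again follows from the relation by an exchange argument.
*)
theory Submission
  imports Defs
begin

lemma min_twice_iff_dominated:
  assumes "finite S"
  shows "min_twice S g \<longleftrightarrow> (\<forall>a\<in>S. g a \<noteq> \<infinity> \<longrightarrow> (\<exists>b\<in>S. b \<noteq> a \<and> g b \<le> g a))"
proof
  assume "min_twice S g"
  then show "\<forall>a\<in>S. g a \<noteq> \<infinity> \<longrightarrow> (\<exists>b\<in>S. b \<noteq> a \<and> g b \<le> g a)"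
    unfolding min_twice_def by metis
next
  assume dominated: "\<forall>a\<in>S. g a \<noteq> \<infinity> \<longrightarrow> (\<exists>b\<in>S. b \<noteq> a \<and> g b \<le> g a)"
  show "min_twice S g"
  proof (cases "\<forall>k\<in>S. g k = \<infinity>")
    case False
    then obtain k where k: "k \<in> S" "g k \<noteq> \<infinity>" by blast
    then have "S \<noteq> {}" by blast
    define a where "a = arg_min_on g S"
    have a: "a \<in> S" "\<forall>k\<in>S. g a \<le> g k"
      unfolding a_def using assms \<open>S \<noteq> {}\<close> by (auto intro: arg_min_if_finite(1) arg_min_least)
    then have "g a \<le> g k" using k(1) by blast
    then have "g a \<noteq> \<infinity>" using k(2) by auto
    with dominated a obtain b where "b \<in> S" "b \<noteq> a" "g b \<le> g a" by blast
    with a have "g a = g b" by (simp add: order_antisym)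
    with a \<open>b \<in> S\<close> \<open>b \<noteq> a\<close> show ?thesis unfolding min_twice_def by metis
  qed (simp add: min_twice_def)
qed

lemma min_twice_product_graph:
  assumes "finite X" and "finite J"
    and graph: "\<And>a. a \<in> J \<Longrightarrow> h a \<noteq> \<infinity> \<Longrightarrow> \<phi> a \<in> X \<and> g (\<phi> a, a) = h a"
    and off_graph: "\<And>j a. j \<in> X \<Longrightarrow> a \<in> J \<Longrightarrow> g (j, a) \<noteq> \<infinity> \<Longrightarrow> j = \<phi> a \<and> g (j, a) = h a"
  shows "min_twice (X \<times> J) g \<longleftrightarrow> min_twice J h"
proof -
  have "finite (X \<times> J)" using assms(1,2) by simp
  have "(\<forall>p\<in>X \<times> J. g p \<noteq> \<infinity> \<longrightarrow> (\<exists>q\<in>X \<times> J. q \<noteq> p \<and> g q \<le> g p)) \<longleftrightarrow>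
      (\<forall>a\<in>J. h a \<noteq> \<infinity> \<longrightarrow> (\<exists>b\<in>J. b \<noteq> a \<and> h b \<le> h a))"
  proof (intro iffI ballI impI)
    fix a assume dominated: "\<forall>p\<in>X \<times> J. g p \<noteq> \<infinity> \<longrightarrow> (\<exists>q\<in>X \<times> J. q \<noteq> p \<and> g q \<le> g p)"
      and "a \<in> J" "h a \<noteq> \<infinity>"
    from graph[OF this(2,3)] have "(\<phi> a, a) \<in> X \<times> J" "g (\<phi> a, a) = h a"
      using \<open>a \<in> J\<close> by simp_all
    with \<open>h a \<noteq> \<infinity>\<close> dominated obtain q where "q \<in> X \<times> J" "q \<noteq> (\<phi> a, a)" "g q \<le> h a"
      by metis
    moreover obtain j b where "q = (j, b)" by (cases q)
    moreover from \<open>g q \<le> h a\<close> \<open>h a \<noteq> \<infinity>\<close> have "g q \<noteq> \<infinity>" by (auto simp: top_unique)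
    ultimately have "b \<in> J" "b \<noteq> a" "h b \<le> h a" using off_graph[of j b] by auto
    then show "\<exists>b\<in>J. b \<noteq> a \<and> h b \<le> h a" by blast
  next
    fix p assume dominated: "\<forall>a\<in>J. h a \<noteq> \<infinity> \<longrightarrow> (\<exists>b\<in>J. b \<noteq> a \<and> h b \<le> h a)"
      and "p \<in> X \<times> J" "g p \<noteq> \<infinity>"
    then obtain j a where p: "p = (j, a)" "j \<in> X" "a \<in> J" by blast
    with off_graph \<open>g p \<noteq> \<infinity>\<close> have "j = \<phi> a" "g p = h a" by simp_all
    with \<open>g p \<noteq> \<infinity>\<close> have "h a \<noteq> \<infinity>" by simp
    with dominated p(3) obtain b where "b \<in> J" "b \<noteq> a" "h b \<le> h a" by blast
    moreover from this have "h b \<noteq> \<infinity>" using \<open>h a \<noteq> \<infinity>\<close> by (auto simp: top_unique)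
    ultimately have "(\<phi> b, b) \<in> X \<times> J" "(\<phi> b, b) \<noteq> p" "g (\<phi> b, b) \<le> g p"
      using graph[of b] \<open>g p = h a\<close> p(1) by auto
    then show "\<exists>q\<in>X \<times> J. q \<noteq> p \<and> g q \<le> g p" by blast
  qed
  then show ?thesis
    unfolding min_twice_iff_dominated[OF \<open>finite (X \<times> J)\<close>] min_twice_iff_dominated[OF assms(2)] .
qed

lemma valuated_matroid_support:
  assumes "valuated_matroid E r \<nu>" and "\<nu> B \<noteq> \<infinity>"
  shows "B \<subseteq> E" and "card B = r"
  using assms unfolding valuated_matroid_def by blast+

lemma valuated_matroid_not_MInfty: "valuated_matroid E r \<nu> \<Longrightarrow> \<nu> B \<noteq> -\<infinity>"
  unfolding valuated_matroid_def by blast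

lemma valuated_matroid_finite: "valuated_matroid E r \<nu> \<Longrightarrow> finite E"
  unfolding valuated_matroid_def by blast

lemma valuated_matroid_ex_basis: "valuated_matroid E r \<nu> \<Longrightarrow> \<exists>B. \<nu> B \<noteq> \<infinity>"
  unfolding valuated_matroid_def by blast

lemma valuated_matroid_basis_finite:
  "valuated_matroid E r \<nu> \<Longrightarrow> \<nu> B \<noteq> \<infinity> \<Longrightarrow> finite B"
  using valuated_matroid_support(1) valuated_matroid_finite finite_subset by metis

lemma valuated_matroid_exchange:
  assumes "valuated_matroid E r \<nu>" and "\<nu> I \<noteq> \<infinity>" and "\<nu> J \<noteq> \<infinity>" and "i \<in> I - J"
  obtains j where "j \<in> J - I" and "\<nu> (insert j (I - {i})) + \<nu> (insert i (J - {j})) \<le> \<nu> I + \<nu> J"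
proof -
  have "I \<subseteq> E" "card I = r" "J \<subseteq> E" "card J = r"
    using valuated_matroid_support[OF assms(1)] assms(2,3) by auto
  then show ?thesis using assms(1,4) that unfolding valuated_matroid_def by metis
qed

lemma valuated_matroid_pluecker_dominated:
  assumes vm: "valuated_matroid E r \<nu>" and a: "a \<in> K - I"
    and finite: "\<nu> (insert a I) + \<nu> (K - {a}) \<noteq> \<infinity>"
  obtains b where "b \<in> K - I" and "b \<noteq> a"
    and "\<nu> (insert b I) + \<nu> (K - {b}) \<le> \<nu> (insert a I) + \<nu> (K - {a})"
proof -
  have "\<nu> (insert a I) \<noteq> \<infinity>" "\<nu> (K - {a}) \<noteq> \<infinity>" using finite by auto
  then obtain j where j: "j \<in> (K - {a}) - insert a I"
    and "\<nu> (insert j (insert a I - {a})) + \<nu> (insert a (K - {a} - {j})) \<le> \<nu> (insert a I) + \<nu> (K - {a})"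
    using valuated_matroid_exchange[OF vm, of "insert a I" "K - {a}" a] by blast
  moreover have "insert j (insert a I - {a}) = insert j I" and "insert a (K - {a} - {j}) = K - {j}"
    using a j by auto
  ultimately show ?thesis using that j by auto
qed

lemma valuated_matroid_pluecker:
  assumes "valuated_matroid E r \<nu>" and "finite K"
  shows "min_twice (K - I) (\<lambda>j. \<nu> (insert j I) + \<nu> (K - {j}))"
proof -
  have "finite (K - I)" using assms(2) by blast
  show ?thesis
    unfolding min_twice_iff_dominated[OF \<open>finite (K - I)\<close>]
  proof (intro ballI impI)
    fix a assume "a \<in> K - I" "\<nu> (insert a I) + \<nu> (K - {a}) \<noteq> \<infinity>"
    then obtain b where "b \<in> K - I" "b \<noteq> a"
      "\<nu> (insert b I) + \<nu> (K - {b}) \<le> \<nu> (insert a I) + \<nu> (K - {a})"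
      using valuated_matroid_pluecker_dominated[OF assms(1)] by blast
    then show "\<exists>b\<in>K - I. b \<noteq> a \<and> \<nu> (insert b I) + \<nu> (K - {b}) \<le> \<nu> (insert a I) + \<nu> (K - {a})"
      by blast
  qed
qed

lemma trop_space_not_MInfty: "x \<in> trop_space E r \<nu> \<Longrightarrow> x e \<noteq> -\<infinity>"
  unfolding trop_space_def by blast

lemma trop_space_dominated:
  assumes "x \<in> trop_space E r \<nu>" and "K \<subseteq> E" and "card K = Suc r" and "a \<in> K"
    and "\<nu> (K - {a}) + x a \<noteq> \<infinity>"
  obtains b where "b \<in> K" and "b \<noteq> a" and "\<nu> (K - {b}) + x b \<le> \<nu> (K - {a}) + x a"
proof -
  have "finite K" using assms(3) by (intro card_ge_0_finite) simp
  have "\<nu> (K - {a}) \<noteq> \<infinity>" using assms(5) by auto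
  with assms(1-4) have "min_twice K (\<lambda>e. \<nu> (K - {e}) + x e)"
    unfolding trop_space_def by blast
  with assms(4,5) have "\<exists>b\<in>K. b \<noteq> a \<and> \<nu> (K - {b}) + x b \<le> \<nu> (K - {a}) + x a"
    unfolding min_twice_iff_dominated[OF \<open>finite K\<close>] by blast
  then show ?thesis using that by blast
qed

lemma trop_spaceI:
  assumes "\<And>e. x e \<noteq> -\<infinity>" and "\<And>e. e \<notin> E \<Longrightarrow> x e = \<infinity>" and "\<exists>e\<in>E. x e \<noteq> \<infinity>"
    and dominated: "\<And>K a. K \<subseteq> E \<Longrightarrow> card K = Suc r \<Longrightarrow> a \<in> K \<Longrightarrow> \<nu> (K - {a}) + x a \<noteq> \<infinity> \<Longrightarrow>
      \<exists>b\<in>K. b \<noteq> a \<and> \<nu> (K - {b}) + x b \<le> \<nu> (K - {a}) + x a"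
  shows "x \<in> trop_space E r \<nu>"
proof -
  have "min_twice K (\<lambda>e. \<nu> (K - {e}) + x e)" if "K \<subseteq> E" "card K = Suc r" for K
  proof -
    have "finite K" using that(2) by (intro card_ge_0_finite) simp
    then show ?thesis unfolding min_twice_iff_dominated[OF \<open>finite K\<close>] using dominated[OF that] by blast
  qed
  with assms(1-3) show ?thesis unfolding trop_space_def by blast
qed

lemma cocircuit_in_trop_space:
  assumes vm: "valuated_matroid E r \<nu>" and "e0 \<notin> I" and e0: "\<nu> (insert e0 I) \<noteq> \<infinity>"
  shows "(\<lambda>e. \<nu> (insert e I)) \<in> trop_space E r \<nu>"
proof (rule trop_spaceI)
  show "\<nu> (insert e I) \<noteq> -\<infinity>" for e
    using valuated_matroid_not_MInfty[OF vm] .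
  show "\<nu> (insert e I) = \<infinity>" if "e \<notin> E" for e
    using valuated_matroid_support(1)[OF vm] that by blast
  show "\<exists>e\<in>E. \<nu> (insert e I) \<noteq> \<infinity>"
    using valuated_matroid_support(1)[OF vm e0] e0 by blast
  have card_I: "Suc (card I) = r"
    using valuated_matroid_support[OF vm e0] valuated_matroid_basis_finite[OF vm e0] \<open>e0 \<notin> I\<close>
    by auto
  fix K a assume "a \<in> K" and finite: "\<nu> (K - {a}) + \<nu> (insert a I) \<noteq> \<infinity>"
  have "a \<notin> I"
  proof
    assume "a \<in> I"
    then have "\<nu> I \<noteq> \<infinity>" using finite by (simp add: insert_absorb)
    then have "card I = r" by (rule valuated_matroid_support(2)[OF vm])
    with card_I show False by simp
  qed
  have "\<nu> (insert a I) + \<nu> (K - {a}) \<noteq> \<infinity>" using finite by (simp add: add.commute)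
  then obtain b where "b \<in> K - I" "b \<noteq> a"
    "\<nu> (insert b I) + \<nu> (K - {b}) \<le> \<nu> (insert a I) + \<nu> (K - {a})"
    using valuated_matroid_pluecker_dominated[OF vm] \<open>a \<in> K\<close> \<open>a \<notin> I\<close> by blast
  then show "\<exists>b\<in>K. b \<noteq> a \<and> \<nu> (K - {b}) + \<nu> (insert b I) \<le> \<nu> (K - {a}) + \<nu> (insert a I)"
    by (metis DiffD1 add.commute)
qed

lemma trop_space_basis_exchange:
  assumes vm: "valuated_matroid E r \<nu>" and x: "x \<in> trop_space E r \<nu>" and B: "\<nu> B \<noteq> \<infinity>"
    and "d0 \<in> E" and "d0 \<notin> B" and "x d0 \<noteq> \<infinity>"
  obtains g where "g \<in> B" and "\<nu> (insert d0 (B - {g})) + x g \<le> \<nu> B + x d0"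
proof -
  let ?K = "insert d0 B"
  have "?K \<subseteq> E" "card ?K = Suc r" "?K - {d0} = B"
    using valuated_matroid_support[OF vm B] valuated_matroid_basis_finite[OF vm B] assms(4,5) by auto
  moreover have "\<nu> B + x d0 \<noteq> \<infinity>"
    using B assms(6) by simp
  ultimately obtain g where "g \<in> ?K" "g \<noteq> d0" "\<nu> (?K - {g}) + x g \<le> \<nu> B + x d0"
    using trop_space_dominated[OF x, of ?K d0] by (metis insertI1)
  moreover have "?K - {g} = insert d0 (B - {g})" using \<open>g \<noteq> d0\<close> by blast
  ultimately show ?thesis using that[of g] by simp
qed

lemma restr_rank_attained:
  assumes vm: "valuated_matroid E r \<nu>"
  shows "\<exists>B. \<nu> B \<noteq> \<infinity> \<and> card (B \<inter> S) = restr_rank E \<nu> S"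
    and "\<nu> B \<noteq> \<infinity> \<Longrightarrow> card (B \<inter> S) \<le> restr_rank E \<nu> S"
proof -
  let ?X = "{card (B \<inter> S) | B. B \<subseteq> E \<and> \<nu> B \<noteq> \<infinity>}"
  have "?X \<subseteq> {..r}"
  proof
    fix c assume "c \<in> ?X"
    then obtain B where "c = card (B \<inter> S)" "\<nu> B \<noteq> \<infinity>" by blast
    then show "c \<in> {..r}"
      using valuated_matroid_support(2)[OF vm] valuated_matroid_basis_finite[OF vm]
      by (metis atMost_iff card_mono inf_le1)
  qed
  then have "finite ?X" by (rule finite_subset) simp
  moreover have "?X \<noteq> {}"
    using valuated_matroid_ex_basis[OF vm] valuated_matroid_support(1)[OF vm] by blast
  ultimately have "Max ?X \<in> ?X" by (rule Max_in)
  then obtain B0 where "\<nu> B0 \<noteq> \<infinity>" "card (B0 \<inter> S) = Max ?X" by auto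
  then show "\<exists>B. \<nu> B \<noteq> \<infinity> \<and> card (B \<inter> S) = restr_rank E \<nu> S"
    unfolding restr_rank_def by blast
  assume "\<nu> B \<noteq> \<infinity>"
  then have "card (B \<inter> S) \<in> ?X" using valuated_matroid_support(1)[OF vm] by blast
  then show "card (B \<inter> S) \<le> restr_rank E \<nu> S"
    unfolding restr_rank_def using Max_ge[OF \<open>finite ?X\<close>] by blast
qed

lemma restr_rank_pointed:
  assumes vm: "valuated_matroid {1..n} r P"
  shows "restr_rank {0..n} (pointed P) (insert 0 S) = restr_rank {1..n} P S"
proof -
  have "{card (B \<inter> insert 0 S) |B. B \<subseteq> {0..n} \<and> pointed P B \<noteq> \<infinity>} =
      {card (B \<inter> S) |B. B \<subseteq> {1..n} \<and> P B \<noteq> \<infinity>}"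
  proof (intro equalityI subsetI)
    fix c assume "c \<in> {card (B \<inter> insert 0 S) |B. B \<subseteq> {0..n} \<and> pointed P B \<noteq> \<infinity>}"
    then obtain B where "c = card (B \<inter> insert 0 S)" "0 \<notin> B" "P B \<noteq> \<infinity>"
      unfolding pointed_def by (auto split: if_splits)
    moreover from this have "B \<subseteq> {1..n}" "B \<inter> insert 0 S = B \<inter> S"
      using valuated_matroid_support(1)[OF vm] by auto
    ultimately show "c \<in> {card (B \<inter> S) |B. B \<subseteq> {1..n} \<and> P B \<noteq> \<infinity>}" by auto
  next
    fix c assume "c \<in> {card (B \<inter> S) |B. B \<subseteq> {1..n} \<and> P B \<noteq> \<infinity>}"
    then obtain B where "c = card (B \<inter> S)" "B \<subseteq> {1..n}" "P B \<noteq> \<infinity>" by blast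
    moreover from this have "0 \<notin> B" "B \<subseteq> {0..n}" "B \<inter> insert 0 S = B \<inter> S" by auto
    ultimately show "c \<in> {card (B \<inter> insert 0 S) |B. B \<subseteq> {0..n} \<and> pointed P B \<noteq> \<infinity>}"
      unfolding pointed_def by auto
  qed
  then show ?thesis unfolding restr_rank_def by simp
qed

locale trop_point_on =
  fixes E :: "'e set" and r :: nat and \<nu> :: "'e set \<Rightarrow> ereal" and x :: "'e \<Rightarrow> ereal"
    and S :: "'e set"
  assumes vm: "valuated_matroid E r \<nu>" and trop: "x \<in> trop_space E r \<nu>" and S_subset: "S \<subseteq> E"
begin

definition infinite_coords :: "'e set" where
  "infinite_coords = {d \<in> S. x d = \<infinity>}"

definition max_bases :: "'e set set" where
  "max_bases = {B. \<nu> B \<noteq> \<infinity> \<and> card (B \<inter> S) = restr_rank E \<nu> S}"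

definition extremal_bases :: "'e set set" where
  "extremal_bases = {B \<in> max_bases.
     \<forall>B'\<in>max_bases. card (B' \<inter> infinite_coords) \<le> card (B \<inter> infinite_coords)}"

text \<open>The weight stands for \<open>\<nu> B - (\<Sum>e\<in>B \<inter> F. x e)\<close>, \<open>F\<close> the coordinates in \<open>S\<close> where \<open>x\<close> is
  finite, shifted by the constant \<open>\<Sum>e\<in>F. x e\<close> so that no subtraction of extended reals occurs.
  Maximising the meeting with \<open>infinite_coords\<close> in \<open>extremal_bases\<close> guarantees that replacing
  \<open>d0\<close> by \<open>d\<close> in an extremal basis never produces a competitor with \<open>x d = \<infinity>\<close>.\<close>

definition weight :: "'e set \<Rightarrow> ereal" where
  "weight B = \<nu> B + (\<Sum>e\<in>S - infinite_coords - B. x e)"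

lemma infinite_coords_subset: "infinite_coords \<subseteq> S"
  unfolding infinite_coords_def by blast

lemma finite_S: "finite S"
  using S_subset valuated_matroid_finite[OF vm] finite_subset by blast

lemma sum_finite_coords: "U \<subseteq> S - infinite_coords \<Longrightarrow> \<bar>\<Sum>e\<in>U. x e\<bar> \<noteq> \<infinity>"
  using trop_space_not_MInfty[OF trop] finite_S finite_subset
  unfolding infinite_coords_def sum_Inf by fastforce

lemma finite_max_bases: "finite max_bases"
proof (rule finite_subset)
  show "max_bases \<subseteq> Pow E"
    unfolding max_bases_def using valuated_matroid_support(1)[OF vm] by blast
  show "finite (Pow E)" using valuated_matroid_finite[OF vm] by simp
qed

lemma extremal_bases_nonempty: "extremal_bases \<noteq> {}"
proof -
  let ?m = "\<lambda>B. card (B \<inter> infinite_coords)"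
  have "max_bases \<noteq> {}"
    unfolding max_bases_def using restr_rank_attained(1)[OF vm] by blast
  then have "Max (?m ` max_bases) \<in> ?m ` max_bases"
    using finite_max_bases by simp
  then obtain B where "B \<in> max_bases" "?m B = Max (?m ` max_bases)" by auto
  moreover have "?m B' \<le> Max (?m ` max_bases)" if "B' \<in> max_bases" for B'
    using finite_max_bases that by simp
  ultimately have "B \<in> extremal_bases" unfolding extremal_bases_def by simp
  then show ?thesis by blast
qed

lemma finite_extremal_bases: "finite extremal_bases"
  using finite_max_bases unfolding extremal_bases_def by simp

lemma weight_exchange:
  assumes B: "B \<in> extremal_bases" and "d0 \<in> S" "x d0 \<noteq> \<infinity>" "d0 \<notin> B"
  shows "\<exists>B'\<in>extremal_bases. d0 \<in> B' \<and> weight B' \<le> weight B"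
proof -
  have "\<nu> B \<noteq> \<infinity>" and card_B: "card (B \<inter> S) = restr_rank E \<nu> S"
    using B unfolding extremal_bases_def max_bases_def by auto
  then obtain g where "g \<in> B" and exch: "\<nu> (insert d0 (B - {g})) + x g \<le> \<nu> B + x d0"
    using trop_space_basis_exchange[OF vm trop] \<open>d0 \<in> S\<close> S_subset assms(3,4) by blast
  define B' where "B' = insert d0 (B - {g})"
  have "\<nu> B' + x g \<noteq> \<infinity>"
    using exch \<open>\<nu> B \<noteq> \<infinity>\<close> assms(3) unfolding B'_def by (auto simp: top_unique)
  then have "\<nu> B' \<noteq> \<infinity>" and "x g \<noteq> \<infinity>" by auto
  have "finite B" using valuated_matroid_basis_finite[OF vm \<open>\<nu> B \<noteq> \<infinity>\<close>] .
  have "g \<in> S"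
  proof (rule ccontr)
    assume "g \<notin> S"
    then have "B' \<inter> S = insert d0 (B \<inter> S)" using \<open>d0 \<in> S\<close> unfolding B'_def by blast
    then have "card (B' \<inter> S) = Suc (restr_rank E \<nu> S)"
      using card_B \<open>finite B\<close> \<open>d0 \<notin> B\<close> by simp
    with restr_rank_attained(2)[OF vm \<open>\<nu> B' \<noteq> \<infinity>\<close>, of S] show False by simp
  qed
  have "B' \<inter> S = insert d0 (B \<inter> S - {g})"
    using \<open>d0 \<in> S\<close> unfolding B'_def by blast
  then have "card (B' \<inter> S) = card (B \<inter> S)"
    using \<open>finite B\<close> \<open>g \<in> B\<close> \<open>g \<in> S\<close> \<open>d0 \<notin> B\<close> card_Suc_Diff1[of "B \<inter> S" g] by simp
  moreover have "B' \<inter> infinite_coords = B \<inter> infinite_coords"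
    using \<open>x g \<noteq> \<infinity>\<close> assms(3) unfolding B'_def infinite_coords_def by auto
  ultimately have "B' \<in> extremal_bases"
    using B \<open>\<nu> B' \<noteq> \<infinity>\<close> card_B unfolding extremal_bases_def max_bases_def by simp
  define U where "U = S - infinite_coords - B - {d0}"
  have "S - infinite_coords - B = insert d0 U" "S - infinite_coords - B' = insert g U"
    using \<open>d0 \<in> S\<close> \<open>g \<in> S\<close> \<open>g \<in> B\<close> \<open>d0 \<notin> B\<close> \<open>x g \<noteq> \<infinity>\<close> assms(3)
    unfolding U_def B'_def infinite_coords_def by auto
  moreover have "finite U" "d0 \<notin> U" "g \<notin> U"
    using finite_S \<open>g \<in> B\<close> unfolding U_def by auto
  ultimately have "weight B = (\<nu> B + x d0) + (\<Sum>e\<in>U. x e)"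
    and "weight B' = (\<nu> B' + x g) + (\<Sum>e\<in>U. x e)"
    unfolding weight_def by (simp_all add: ac_simps)
  with exch have "weight B' \<le> weight B"
    unfolding B'_def by (simp add: add_right_mono)
  with \<open>B' \<in> extremal_bases\<close> show ?thesis unfolding B'_def by blast
qed

lemma min_weight_basis_containing:
  assumes "d0 \<in> S" and "x d0 \<noteq> \<infinity>"
  obtains B where "B \<in> extremal_bases" and "d0 \<in> B"
    and "\<And>B'. B' \<in> extremal_bases \<Longrightarrow> weight B \<le> weight B'"
proof -
  define B1 where "B1 = arg_min_on weight extremal_bases"
  have "B1 \<in> extremal_bases" and B1_min: "\<And>B'. B' \<in> extremal_bases \<Longrightarrow> weight B1 \<le> weight B'"
    unfolding B1_def using finite_extremal_bases extremal_bases_nonempty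
    by (auto intro: arg_min_if_finite(1) arg_min_least)
  show ?thesis
  proof (cases "d0 \<in> B1")
    case True
    with \<open>B1 \<in> extremal_bases\<close> B1_min that show ?thesis by blast
  next
    case False
    then obtain B where "B \<in> extremal_bases" "d0 \<in> B" "weight B \<le> weight B1"
      using weight_exchange[OF \<open>B1 \<in> extremal_bases\<close> assms] by blast
    with B1_min that show ?thesis by (meson order.trans)
  qed
qed

lemma replacement_extremal:
  assumes B: "B \<in> extremal_bases" and "d0 \<in> B" "d0 \<in> S" "x d0 \<noteq> \<infinity>"
    and "d \<in> S" "d \<notin> B \<inter> S - {d0}" "C \<inter> S = {}"
    and finite: "\<nu> (insert d (B \<inter> S - {d0}) \<union> C) \<noteq> \<infinity>"
  shows "insert d (B \<inter> S - {d0}) \<union> C \<in> extremal_bases" and "x d \<noteq> \<infinity>"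
proof -
  define B' where "B' = insert d (B \<inter> S - {d0}) \<union> C"
  have "\<nu> B \<noteq> \<infinity>" and card_B: "card (B \<inter> S) = restr_rank E \<nu> S"
    and B_max: "\<And>B'. B' \<in> max_bases \<Longrightarrow> card (B' \<inter> infinite_coords) \<le> card (B \<inter> infinite_coords)"
    using B unfolding extremal_bases_def max_bases_def by auto
  have "finite B" using valuated_matroid_basis_finite[OF vm \<open>\<nu> B \<noteq> \<infinity>\<close>] .
  have "d0 \<notin> infinite_coords" using assms(4) unfolding infinite_coords_def by simp
  have B'_S: "B' \<inter> S = insert d (B \<inter> S - {d0})"
    using assms(5,7) unfolding B'_def by blast
  then have "card (B' \<inter> S) = card (B \<inter> S)"
    using \<open>finite B\<close> assms(2,3,6) card_Suc_Diff1[of "B \<inter> S" d0] by simp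
  then have "B' \<in> max_bases"
    using finite card_B unfolding max_bases_def B'_def by simp
  show "x d \<noteq> \<infinity>"
  proof
    assume "x d = \<infinity>"
    with assms(5) have "d \<in> infinite_coords" unfolding infinite_coords_def by blast
    with infinite_coords_subset have "B' \<inter> infinite_coords = insert d (B \<inter> infinite_coords)"
      and "d \<notin> B \<inter> infinite_coords"
      using B'_S \<open>d0 \<notin> infinite_coords\<close> assms(6) by auto
    then have "card (B' \<inter> infinite_coords) = Suc (card (B \<inter> infinite_coords))"
      using \<open>finite B\<close> by simp
    with B_max[OF \<open>B' \<in> max_bases\<close>] show False by simp
  qed
  then have "d \<notin> infinite_coords" unfolding infinite_coords_def by simp
  then have "B' \<inter> infinite_coords = B \<inter> infinite_coords"
    using B'_S \<open>d0 \<notin> infinite_coords\<close> infinite_coords_subset by auto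
  with \<open>B' \<in> max_bases\<close> B show "B' \<in> extremal_bases"
    unfolding extremal_bases_def by simp
qed

lemma min_weight_basis_inequality:
  assumes B: "B \<in> extremal_bases" and B_min: "\<And>B'. B' \<in> extremal_bases \<Longrightarrow> weight B \<le> weight B'"
    and "d0 \<in> B" "d0 \<in> S" "x d0 \<noteq> \<infinity>"
    and "d \<in> S" "d \<notin> B \<inter> S - {d0}" "C \<inter> S = {}"
  shows "x d + \<nu> B \<le> x d0 + \<nu> (insert d (B \<inter> S - {d0}) \<union> C)"
proof (cases "\<nu> (insert d (B \<inter> S - {d0}) \<union> C) = \<infinity>")
  case False
  define B' where "B' = insert d (B \<inter> S - {d0}) \<union> C"
  note extremal = replacement_extremal[OF B assms(3-8) False, folded B'_def]
  have le: "weight B \<le> weight B'" using B_min[OF extremal(1)] .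
  have "d \<notin> infinite_coords" "d0 \<notin> infinite_coords"
    using extremal(2) assms(5) unfolding infinite_coords_def by auto
  define U where "U = S - infinite_coords - B - {d}"
  have "\<bar>\<Sum>e\<in>U. x e\<bar> \<noteq> \<infinity>" by (rule sum_finite_coords) (auto simp: U_def)
  have "finite U" "d0 \<notin> U" "d \<notin> U"
    using finite_S assms(3) unfolding U_def by auto
  have "x d + \<nu> B + (\<Sum>e\<in>U. x e) \<le> x d0 + \<nu> B' + (\<Sum>e\<in>U. x e)"
  proof (cases "d = d0")
    case True
    have "S - infinite_coords - B = U" "S - infinite_coords - B' = U"
      using True assms(3,8) unfolding U_def B'_def by auto
    with le show ?thesis
      unfolding weight_def True by (simp add: add.assoc add_left_mono)
  next
    case False
    have "S - infinite_coords - B = insert d U" "S - infinite_coords - B' = insert d0 U"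
      using False \<open>d \<notin> infinite_coords\<close> \<open>d0 \<notin> infinite_coords\<close> assms(3,4,6,7,8)
      unfolding U_def B'_def by auto
    with le \<open>finite U\<close> \<open>d0 \<notin> U\<close> \<open>d \<notin> U\<close> show ?thesis
      unfolding weight_def by (simp add: ac_simps)
  qed
  moreover have "(\<Sum>e\<in>U. x e) \<noteq> \<infinity>" "(\<Sum>e\<in>U. x e) \<noteq> -\<infinity>"
    using \<open>\<bar>\<Sum>e\<in>U. x e\<bar> \<noteq> \<infinity>\<close> by auto
  ultimately show ?thesis
    unfolding B'_def by (simp add: ereal_add_le_add_iff2)
qed simp

lemma optimal_basis:
  assumes "d0 \<in> S" and "x d0 \<noteq> \<infinity>"
  obtains B where "\<nu> B \<noteq> \<infinity>" and "d0 \<in> B" and "card (B \<inter> S) = restr_rank E \<nu> S"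
    and "\<And>d C. d \<in> S \<Longrightarrow> d \<notin> B \<inter> S - {d0} \<Longrightarrow> C \<inter> S = {} \<Longrightarrow>
      x d + \<nu> B \<le> x d0 + \<nu> (insert d (B \<inter> S - {d0}) \<union> C)"
proof -
  obtain B where B: "B \<in> extremal_bases" "d0 \<in> B"
    and B_min: "\<And>B'. B' \<in> extremal_bases \<Longrightarrow> weight B \<le> weight B'"
    using min_weight_basis_containing[OF assms] by blast
  then have "\<nu> B \<noteq> \<infinity>" "card (B \<inter> S) = restr_rank E \<nu> S"
    unfolding extremal_bases_def max_bases_def by auto
  with B that show ?thesis
    using min_weight_basis_inequality[OF B(1) B_min B(2) assms] by blast
qed

end

lemma trop_space_adapted_basis:
  assumes vm: "valuated_matroid E r \<nu>" and x: "x \<in> trop_space E r \<nu>"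
    and "d0 \<in> E" and "x d0 \<noteq> \<infinity>"
  obtains I where "d0 \<notin> I" and "\<nu> (insert d0 I) \<noteq> \<infinity>"
    and "\<And>d. d \<in> E \<Longrightarrow> d \<notin> I \<Longrightarrow> x d + \<nu> (insert d0 I) \<le> x d0 + \<nu> (insert d I)"
proof -
  have point: "trop_point_on E r \<nu> x E"
    using vm x subset_refl by (rule trop_point_on.intro)
  obtain B where "\<nu> B \<noteq> \<infinity>" "d0 \<in> B" "card (B \<inter> E) = restr_rank E \<nu> E"
    and B_opt: "\<And>d C. d \<in> E \<Longrightarrow> d \<notin> B \<inter> E - {d0} \<Longrightarrow>
      C \<inter> E = {} \<Longrightarrow> x d + \<nu> B \<le> x d0 + \<nu> (insert d (B \<inter> E - {d0}) \<union> C)"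
    using trop_point_on.optimal_basis[OF point assms(3,4)] by blast
  have "B \<inter> E = B" using valuated_matroid_support(1)[OF vm \<open>\<nu> B \<noteq> \<infinity>\<close>] by blast
  have B: "insert d0 (B - {d0}) = B" using \<open>d0 \<in> B\<close> by blast
  show ?thesis
  proof (rule that[of "B - {d0}"])
    show "d0 \<notin> B - {d0}" by blast
    show "\<nu> (insert d0 (B - {d0})) \<noteq> \<infinity>" unfolding B by fact
    fix d assume "d \<in> E" "d \<notin> B - {d0}"
    then show "x d + \<nu> (insert d0 (B - {d0})) \<le> x d0 + \<nu> (insert d (B - {d0}))"
      using B_opt[OF \<open>d \<in> E\<close>, of "{}"] unfolding B \<open>B \<inter> E = B\<close> by simp
  qed
qed

locale weakly_monomial_matrix =
  fixes val :: "'k::field \<Rightarrow> ereal" and n :: nat and M :: "nat \<Rightarrow> nat \<Rightarrow> 'k"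
  assumes valuation: "valuation val" and weakly_monomial: "weakly_monomial n M"
begin

definition support_rows :: "nat set" where
  "support_rows = {i \<in> {1..n}. \<exists>j\<in>{1..n}. M i j \<noteq> 0}"

definition col :: "nat \<Rightarrow> nat" where
  "col i = (THE j. j \<in> {1..n} \<and> M i j \<noteq> 0)"

definition wt :: "nat \<Rightarrow> ereal" where
  "wt i = (if i \<in> support_rows then val (M i (col i)) else \<infinity>)"

lemma val_eq_infinity_iff: "val a = \<infinity> \<longleftrightarrow> a = 0"
  using valuation unfolding valuation_def by metis

lemma val_not_MInfty: "val a \<noteq> -\<infinity>"
  using valuation unfolding valuation_def by (metis MInfty_neq_PInfty(1))

lemma support_rows_subset: "support_rows \<subseteq> {1..n}"
  unfolding support_rows_def by blast

lemma col_spec: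
  assumes "i \<in> support_rows"
  shows "col i \<in> {1..n}" and "M i (col i) \<noteq> 0"
    and "\<And>j. j \<in> {1..n} \<Longrightarrow> M i j \<noteq> 0 \<Longrightarrow> j = col i"
proof -
  obtain j where j: "j \<in> {1..n}" "M i j \<noteq> 0" and "i \<in> {1..n}"
    using assms unfolding support_rows_def by blast
  with weakly_monomial have unique: "\<And>j'. j' \<in> {1..n} \<Longrightarrow> M i j' \<noteq> 0 \<Longrightarrow> j' = j"
    unfolding weakly_monomial_def by blast
  have "col i = j" unfolding col_def
  proof (rule the_equality)
    show "j \<in> {1..n} \<and> M i j \<noteq> 0" using j by blast
    show "j' = j" if "j' \<in> {1..n} \<and> M i j' \<noteq> 0" for j' using unique that by blast
  qed
  with j show "col i \<in> {1..n}" "M i (col i) \<noteq> 0" by simp_all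
  fix j' assume "j' \<in> {1..n}" "M i j' \<noteq> 0"
  with unique \<open>col i = j\<close> show "j' = col i" by simp
qed

lemma wt_not_MInfty: "wt i \<noteq> -\<infinity>"
  unfolding wt_def using val_not_MInfty by simp

lemma wt_finite_iff: "wt i \<noteq> \<infinity> \<longleftrightarrow> i \<in> support_rows"
  unfolding wt_def by (simp add: val_eq_infinity_iff col_spec(2))

lemma val_entry:
  assumes "i \<in> {1..n}" and "j \<in> {1..n}"
  shows "val (M i j) = (if i \<in> support_rows \<and> j = col i then wt i else \<infinity>)"
proof (cases "M i j = 0")
  case True
  then have "\<not> (i \<in> support_rows \<and> j = col i)" using col_spec(2) by blast
  with True show ?thesis by (auto simp: val_eq_infinity_iff)
next
  case False
  with assms have "i \<in> support_rows" unfolding support_rows_def by blast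
  with col_spec(3)[OF this assms(2) False] show ?thesis unfolding wt_def by simp
qed

lemma trop_mat_vec_eq:
  "trop_mat_vec val n M x i = (if i \<in> {1..n} then wt i + x (col i) else \<infinity>)"
proof (cases "i \<in> {1..n}")
  case True
  have "(INF j\<in>{1..n}. val (M i j) + x j) = wt i + x (col i)"
  proof (cases "i \<in> support_rows")
    case True
    show ?thesis
    proof (rule antisym)
      show "(INF j\<in>{1..n}. val (M i j) + x j) \<le> wt i + x (col i)"
        using INF_lower[OF col_spec(1)[OF True], of "\<lambda>j. val (M i j) + x j"]
          val_entry[OF \<open>i \<in> {1..n}\<close> col_spec(1)[OF True]] True
        by simp
      show "wt i + x (col i) \<le> (INF j\<in>{1..n}. val (M i j) + x j)"
      proof (rule INF_greatest)
        fix j assume "j \<in> {1..n}"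
        then have "val (M i j) = (if j = col i then wt i else \<infinity>)"
          using val_entry[OF \<open>i \<in> {1..n}\<close>] True by simp
        then show "wt i + x (col i) \<le> val (M i j) + x j" by (cases "j = col i") simp_all
      qed
    qed
  next
    case False
    have "(INF j\<in>{1..n}. val (M i j) + x j) = \<infinity>"
    proof (rule INF_eq_const)
      show "{1..n} \<noteq> {}" using \<open>i \<in> {1..n}\<close> by blast
      fix j assume "j \<in> {1..n}"
      then have "val (M i j) = \<infinity>" using val_entry[OF \<open>i \<in> {1..n}\<close>] False by simp
      then show "val (M i j) + x j = \<infinity>" by simp
    qed
    with False show ?thesis unfolding wt_def by simp
  qed
  with True show ?thesis unfolding trop_mat_vec_def by simp
next
  case False
  then show ?thesis unfolding trop_mat_vec_def by auto
qed

lemma assoc_map_eq: "assoc_map val n M i = (if i \<in> support_rows then col i else 0, wt i)"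
proof (cases "i \<in> support_rows")
  case True
  then have "i \<in> {1..n} \<and> (\<exists>j\<in>{1..n}. M i j \<noteq> 0)" unfolding support_rows_def by blast
  with True show ?thesis unfolding assoc_map_def wt_def col_def[symmetric] by (simp add: Let_def)
next
  case False
  then have "\<not> (i \<in> {1..n} \<and> (\<exists>j\<in>{1..n}. M i j \<noteq> 0))" unfolding support_rows_def by blast
  with False show ?thesis unfolding assoc_map_def wt_def by auto
qed

lemma sum_wt_finite: "I \<subseteq> support_rows \<Longrightarrow> \<bar>\<Sum>i\<in>I. wt i\<bar> \<noteq> \<infinity>"
proof -
  assume "I \<subseteq> support_rows"
  then have "\<bar>wt i\<bar> \<noteq> \<infinity>" if "i \<in> I" for i
    using that wt_finite_iff wt_not_MInfty by auto
  then show ?thesis unfolding sum_Inf by auto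
qed

end

definition arrow_relations :: "('k::field \<Rightarrow> ereal) \<Rightarrow> nat \<Rightarrow> (nat \<Rightarrow> nat \<Rightarrow> 'k) \<Rightarrow> nat \<Rightarrow> nat
    \<Rightarrow> (nat set \<Rightarrow> ereal) \<Rightarrow> (nat set \<Rightarrow> ereal) \<Rightarrow> bool" where
  "arrow_relations val n M r k P Q \<longleftrightarrow>
     (\<forall>I J. 1 \<le> r \<and> I \<subseteq> {1..n} \<and> card I = r - 1 \<and> J \<subseteq> {1..n} \<and> card J = k + 1 \<longrightarrow>
        min_twice (({1..n} - I) \<times> J) (\<lambda>(j, i). val (M i j) + P (insert j I) + Q (J - {i})))"

lemma QDr_iff_arrow_relations:
  assumes "\<forall>i\<in>V. valuated_matroid {1..n} (d i) (\<mu> i)"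
  shows "QDr val n V Arr s t A d \<mu> \<longleftrightarrow>
    (\<forall>\<alpha>\<in>Arr. arrow_relations val n (A \<alpha>) (d (s \<alpha>)) (d (t \<alpha>)) (\<mu> (s \<alpha>)) (\<mu> (t \<alpha>)))"
proof -
  have "\<forall>i\<in>V. (\<forall>S. \<mu> i S \<noteq> -\<infinity>) \<and> (\<forall>S. \<not> (S \<subseteq> {1..n} \<and> card S = d i) \<longrightarrow> \<mu> i S = \<infinity>) \<and>
      (\<exists>S. \<mu> i S \<noteq> \<infinity>)"
    using assms valuated_matroid_not_MInfty valuated_matroid_support valuated_matroid_ex_basis by metis
  moreover have "\<forall>i\<in>V. \<forall>I J. 1 \<le> d i \<and> I \<subseteq> {1..n} \<and> card I = d i - 1 \<and> J \<subseteq> {1..n} \<and>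
      card J = d i + 1 \<longrightarrow> min_twice (J - I) (\<lambda>j. \<mu> i (insert j I) + \<mu> i (J - {j}))"
    using assms valuated_matroid_pluecker finite_subset[of _ "{1..n}"] by blast
  ultimately show ?thesis unfolding QDr_def arrow_relations_def by blast
qed

locale quiver_arrow = weakly_monomial_matrix val n M
  for val :: "'k::field \<Rightarrow> ereal" and n :: nat and M :: "nat \<Rightarrow> nat \<Rightarrow> 'k" +
  fixes r k :: nat and P Q :: "nat set \<Rightarrow> ereal"
  assumes vm_source: "valuated_matroid {1..n} r P" and vm_target: "valuated_matroid {1..n} k Q"
begin

text \<open>Only the pairs \<open>(col a, a)\<close> contribute finite terms to the arrow relation for \<open>(I, J)\<close>, and
  \<open>relation_term I J a\<close> is the value of that term (\<open>arrow_relations_iff\<close>).\<close>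

definition relation_term :: "nat set \<Rightarrow> nat set \<Rightarrow> nat \<Rightarrow> ereal" where
  "relation_term I J a = wt a + P (insert (col a) I) + Q (J - {a})"

lemma relation_term_finite:
  assumes "relation_term I J a \<noteq> \<infinity>" and "I \<subseteq> {1..n}" and "card I = r - 1"
  shows "a \<in> support_rows" and "col a \<notin> I" and "P (insert (col a) I) \<noteq> \<infinity>"
    and "Q (J - {a}) \<noteq> \<infinity>" and "1 \<le> r"
proof -
  show "a \<in> support_rows" "P (insert (col a) I) \<noteq> \<infinity>" "Q (J - {a}) \<noteq> \<infinity>"
    using assms(1) wt_finite_iff unfolding relation_term_def by auto
  then have card_insert: "card (insert (col a) I) = r"
    using valuated_matroid_support(2)[OF vm_source] by blast
  have "finite I" using assms(2) finite_subset by blast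
  show "col a \<notin> I"
  proof
    assume "col a \<in> I"
    then have "card I = r" "I \<noteq> {}" using card_insert by (auto simp: insert_absorb)
    with assms(3) \<open>finite I\<close> show False by (cases r) auto
  qed
  with card_insert \<open>finite I\<close> show "1 \<le> r" by simp
qed

lemma arrow_relations_iff:
  "arrow_relations val n M r k P Q \<longleftrightarrow>
     (\<forall>I J. 1 \<le> r \<and> I \<subseteq> {1..n} \<and> card I = r - 1 \<and> J \<subseteq> {1..n} \<and> card J = k + 1 \<longrightarrow>
        min_twice J (relation_term I J))"
proof -
  have "min_twice (({1..n} - I) \<times> J) (\<lambda>(j, i). val (M i j) + P (insert j I) + Q (J - {i}))
      \<longleftrightarrow> min_twice J (relation_term I J)"
    if "I \<subseteq> {1..n}" "card I = r - 1" "J \<subseteq> {1..n}" for I J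
  proof (rule min_twice_product_graph)
    show "finite ({1..n} - I)" "finite J" using that(3) finite_subset by auto
    fix a assume "a \<in> J" "relation_term I J a \<noteq> \<infinity>"
    with relation_term_finite[OF _ that(1,2)] have "a \<in> support_rows" "col a \<notin> I" by auto
    moreover have "a \<in> {1..n}" using \<open>a \<in> J\<close> that(3) by blast
    ultimately show "col a \<in> {1..n} - I \<and>
        (\<lambda>(j, i). val (M i j) + P (insert j I) + Q (J - {i})) (col a, a) = relation_term I J a"
      using col_spec(1) val_entry unfolding relation_term_def by simp
  next
    fix j a assume "j \<in> {1..n} - I" "a \<in> J"
      and "(\<lambda>(j, i). val (M i j) + P (insert j I) + Q (J - {i})) (j, a) \<noteq> \<infinity>"
    moreover have "a \<in> {1..n}" using \<open>a \<in> J\<close> that(3) by blast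
    ultimately have "a \<in> support_rows" "j = col a"
      using val_entry[of a j] by (auto split: if_splits)
    then show "j = col a \<and> (\<lambda>(j, i). val (M i j) + P (insert j I) + Q (J - {i})) (j, a)
        = relation_term I J a"
      using val_entry[of a j] \<open>a \<in> {1..n}\<close> \<open>j \<in> {1..n} - I\<close> unfolding relation_term_def by simp
  qed
  then show ?thesis unfolding arrow_relations_def by blast
qed

lemma arrow_relationsD:
  assumes "arrow_relations val n M r k P Q"
    and "I \<subseteq> {1..n}" "card I = r - 1" "J \<subseteq> {1..n}" "card J = k + 1"
    and "a \<in> J" "relation_term I J a \<noteq> \<infinity>"
  obtains b where "b \<in> J" "b \<noteq> a" "relation_term I J b \<le> relation_term I J a"
proof -
  have "1 \<le> r" using relation_term_finite(5)[OF assms(7,2,3)] .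
  with assms(1-5) have "min_twice J (relation_term I J)"
    unfolding arrow_relations_iff by blast
  moreover have "finite J" using assms(4) finite_subset by blast
  ultimately show ?thesis
    using assms(6,7) that unfolding min_twice_iff_dominated[OF \<open>finite J\<close>] by blast
qed

lemma arrow_relationsI:
  assumes "\<And>I J a. I \<subseteq> {1..n} \<Longrightarrow> card I = r - 1 \<Longrightarrow> J \<subseteq> {1..n} \<Longrightarrow> card J = k + 1 \<Longrightarrow>
      a \<in> J \<Longrightarrow> relation_term I J a \<noteq> \<infinity> \<Longrightarrow>
      \<exists>b\<in>J. b \<noteq> a \<and> relation_term I J b \<le> relation_term I J a"
  shows "arrow_relations val n M r k P Q"
proof -
  have "min_twice J (relation_term I J)"
    if "I \<subseteq> {1..n}" "card I = r - 1" "J \<subseteq> {1..n}" "card J = k + 1" for I J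
  proof -
    have "finite J" using that(3) finite_subset by blast
    then show ?thesis
      unfolding min_twice_iff_dominated[OF \<open>finite J\<close>] using assms[OF that] by blast
  qed
  then show ?thesis unfolding arrow_relations_iff by blast
qed

lemma trop_mat_vec_in_trop_spaceI:
  assumes x: "x \<in> trop_space {1..n} r P" and "\<exists>i. trop_mat_vec val n M x i \<noteq> \<infinity>"
    and dominated: "\<And>K a. K \<subseteq> {1..n} \<Longrightarrow> card K = Suc k \<Longrightarrow> a \<in> K \<Longrightarrow>
      Q (K - {a}) + (wt a + x (col a)) \<noteq> \<infinity> \<Longrightarrow>
      \<exists>b\<in>K. b \<noteq> a \<and> Q (K - {b}) + (wt b + x (col b)) \<le> Q (K - {a}) + (wt a + x (col a))"
  shows "trop_mat_vec val n M x \<in> trop_space {1..n} k Q"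
proof (rule trop_spaceI)
  show "trop_mat_vec val n M x i \<noteq> -\<infinity>" for i
    using wt_not_MInfty trop_space_not_MInfty[OF x] unfolding trop_mat_vec_eq by simp
  show "trop_mat_vec val n M x i = \<infinity>" if "i \<notin> {1..n}" for i
    using that unfolding trop_mat_vec_eq by auto
  show "\<exists>i\<in>{1..n}. trop_mat_vec val n M x i \<noteq> \<infinity>"
  proof -
    from assms(2) obtain i where "trop_mat_vec val n M x i \<noteq> \<infinity>" by blast
    moreover from this have "i \<in> {1..n}" unfolding trop_mat_vec_eq by (cases "i \<in> {1..n}") auto
    ultimately show ?thesis by blast
  qed
  fix K a assume "K \<subseteq> {1..n}" "card K = Suc k" "a \<in> K"
  moreover from this have "trop_mat_vec val n M x b = wt b + x (col b)" if "b \<in> K" for b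
    using that unfolding trop_mat_vec_eq by auto
  moreover assume "Q (K - {a}) + trop_mat_vec val n M x a \<noteq> \<infinity>"
  ultimately show "\<exists>b\<in>K. b \<noteq> a \<and> Q (K - {b}) + trop_mat_vec val n M x b
      \<le> Q (K - {a}) + trop_mat_vec val n M x a"
    using dominated by simp
qed

lemma maps_trop_space_if_arrow_relations:
  assumes rel: "arrow_relations val n M r k P Q" and x: "x \<in> trop_space {1..n} r P"
    and "\<exists>i. trop_mat_vec val n M x i \<noteq> \<infinity>"
  shows "trop_mat_vec val n M x \<in> trop_space {1..n} k Q"
proof (rule trop_mat_vec_in_trop_spaceI[OF x assms(3)])
  fix K i0 assume K: "K \<subseteq> {1..n}" "card K = Suc k" "i0 \<in> K"
    and finite: "Q (K - {i0}) + (wt i0 + x (col i0)) \<noteq> \<infinity>"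
  then have "i0 \<in> support_rows" "x (col i0) \<noteq> \<infinity>"
    using wt_finite_iff by auto
  define d0 where "d0 = col i0"
  have "d0 \<in> {1..n}" using col_spec(1)[OF \<open>i0 \<in> support_rows\<close>] unfolding d0_def .
  then obtain I where "d0 \<notin> I" "P (insert d0 I) \<noteq> \<infinity>"
    and opt: "\<And>d. d \<in> {1..n} \<Longrightarrow> d \<notin> I \<Longrightarrow> x d + P (insert d0 I) \<le> x d0 + P (insert d I)"
    using trop_space_adapted_basis[OF vm_source x] \<open>x (col i0) \<noteq> \<infinity>\<close> unfolding d0_def by blast
  define B where "B = insert d0 I"
  have "P B \<noteq> \<infinity>" unfolding B_def by fact
  then have "B \<subseteq> {1..n}" "card B = r" "finite B"
    using valuated_matroid_support[OF vm_source] valuated_matroid_basis_finite[OF vm_source] by auto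
  then have I: "I \<subseteq> {1..n}" "card I = r - 1" "insert d0 I = B"
    unfolding B_def using \<open>d0 \<notin> I\<close> by auto
  have term_i0: "relation_term I K i0 = wt i0 + P B + Q (K - {i0})"
    unfolding relation_term_def d0_def[symmetric] I(3) ..
  have "relation_term I K i0 \<noteq> \<infinity>"
    using finite \<open>P B \<noteq> \<infinity>\<close> unfolding term_i0 by simp
  then obtain b where "b \<in> K" "b \<noteq> i0" and b_le: "relation_term I K b \<le> relation_term I K i0"
    using arrow_relationsD[OF rel I(1,2) K(1)] K(2,3) by (metis Suc_eq_plus1)
  then have "relation_term I K b \<noteq> \<infinity>"
    using \<open>relation_term I K i0 \<noteq> \<infinity>\<close> by (auto simp: top_unique)
  then have "b \<in> support_rows" "col b \<notin> I"
    using relation_term_finite[OF _ I(1,2)] by auto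
  then have opt_b: "x (col b) + P B \<le> x d0 + P (insert (col b) I)"
    unfolding B_def using opt col_spec(1) by blast
  have "(Q (K - {b}) + (wt b + x (col b))) + P B = (wt b + Q (K - {b})) + (x (col b) + P B)"
    by (simp add: ac_simps)
  also have "\<dots> \<le> (wt b + Q (K - {b})) + (x d0 + P (insert (col b) I))"
    using opt_b by (rule add_left_mono)
  also have "\<dots> = relation_term I K b + x d0"
    unfolding relation_term_def by (simp add: ac_simps)
  also have "\<dots> \<le> relation_term I K i0 + x d0"
    using b_le by (rule add_right_mono)
  also have "\<dots> = (Q (K - {i0}) + (wt i0 + x (col i0))) + P B"
    unfolding term_i0 d0_def by (simp add: ac_simps)
  finally have "(Q (K - {b}) + (wt b + x (col b))) + P B \<le> (Q (K - {i0}) + (wt i0 + x (col i0))) + P B" .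
  then have "Q (K - {b}) + (wt b + x (col b)) \<le> Q (K - {i0}) + (wt i0 + x (col i0))"
    using \<open>P B \<noteq> \<infinity>\<close> valuated_matroid_not_MInfty[OF vm_source] by (simp add: ereal_add_le_add_iff2)
  with \<open>b \<in> K\<close> \<open>b \<noteq> i0\<close> show "\<exists>b\<in>K. b \<noteq> i0 \<and>
      Q (K - {b}) + (wt b + x (col b)) \<le> Q (K - {i0}) + (wt i0 + x (col i0))" by blast
qed

lemma arrow_relations_if_maps_trop_space:
  assumes maps: "\<forall>x\<in>trop_space {1..n} r P. (\<exists>i. trop_mat_vec val n M x i \<noteq> \<infinity>) \<longrightarrow>
      trop_mat_vec val n M x \<in> trop_space {1..n} k Q"
  shows "arrow_relations val n M r k P Q"
proof (rule arrow_relationsI)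
  fix I J a assume I: "I \<subseteq> {1..n}" "card I = r - 1" and J: "J \<subseteq> {1..n}" "card J = k + 1"
    and "a \<in> J" and finite: "relation_term I J a \<noteq> \<infinity>"
  then have "col a \<notin> I" "P (insert (col a) I) \<noteq> \<infinity>" "Q (J - {a}) \<noteq> \<infinity>"
    using relation_term_finite[OF finite I] by auto
  define x where "x e = P (insert e I)" for e
  have x_trop: "x \<in> trop_space {1..n} r P"
    unfolding x_def using cocircuit_in_trop_space[OF vm_source] \<open>col a \<notin> I\<close> \<open>P (insert (col a) I) \<noteq> \<infinity>\<close> .
  define y where "y = trop_mat_vec val n M x"
  have y_term: "Q (J - {b}) + y b = relation_term I J b" if "b \<in> J" for b
  proof -
    have "b \<in> {1..n}" using that J(1) by blast
    then have "y b = wt b + P (insert (col b) I)" unfolding y_def trop_mat_vec_eq x_def by simp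
    then show ?thesis unfolding relation_term_def by (simp add: ac_simps)
  qed
  then have "Q (J - {a}) + y a \<noteq> \<infinity>" using finite \<open>a \<in> J\<close> by simp
  then have "trop_mat_vec val n M x a \<noteq> \<infinity>" unfolding y_def by auto
  with maps x_trop have y_trop: "y \<in> trop_space {1..n} k Q" unfolding y_def by blast
  have "card J = Suc k" using J(2) by simp
  then obtain b where "b \<in> J" "b \<noteq> a" "Q (J - {b}) + y b \<le> Q (J - {a}) + y a"
    using trop_space_dominated[OF y_trop J(1) _ \<open>a \<in> J\<close> \<open>Q (J - {a}) + y a \<noteq> \<infinity>\<close>] by metis
  then show "\<exists>b\<in>J. b \<noteq> a \<and> relation_term I J b \<le> relation_term I J a"
    using y_term[OF \<open>b \<in> J\<close>] y_term[OF \<open>a \<in> J\<close>] by auto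
qed

text \<open>\<open>restr_min\<close> is the restriction of \<open>P\<close> to the image columns (deletion of the others), the
  \<open>restrict_vm\<close> of the affine induced matroid up to the extra loop \<open>0\<close>.\<close>

definition image_cols :: "nat set" where
  "image_cols = col ` support_rows"

definition restr_min :: "nat set \<Rightarrow> ereal" where
  "restr_min X = (INF C\<in>Pow ({1..n} - image_cols). P (X \<union> C))"

lemma image_cols_subset: "image_cols \<subseteq> {1..n}"
  unfolding image_cols_def using col_spec(1) by blast

lemma col_image_assoc_map:
  "fst ` assoc_map val n M ` B = (\<lambda>i. if i \<in> support_rows then col i else 0) ` B"
  unfolding assoc_map_eq image_image by simp

lemma col_image_assoc_map_all: "fst ` assoc_map val n M ` {0..n} = insert 0 image_cols"
proof -
  have "0 \<notin> support_rows" using support_rows_subset by auto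
  then have "(\<lambda>i. if i \<in> support_rows then col i else 0) ` {0..n} = insert 0 image_cols"
    unfolding image_cols_def using support_rows_subset by (force simp: image_iff)
  then show ?thesis unfolding col_image_assoc_map .
qed

lemma affine_rank_eq: "affine_rank val n M P = restr_rank {1..n} P image_cols"
  unfolding affine_rank_def col_image_assoc_map_all using restr_rank_pointed[OF vm_source] .

lemma restr_min_le: "C \<subseteq> {1..n} \<Longrightarrow> C \<inter> image_cols = {} \<Longrightarrow> restr_min X \<le> P (X \<union> C)"
  unfolding restr_min_def by (rule INF_lower) blast

lemma restr_min_attained: "\<exists>C. C \<subseteq> {1..n} \<and> C \<inter> image_cols = {} \<and> restr_min X = P (X \<union> C)"
proof -
  have "finite (Pow ({1..n} - image_cols))" by simp
  then have "Min ((\<lambda>C. P (X \<union> C)) ` Pow ({1..n} - image_cols)) \<in> (\<lambda>C. P (X \<union> C)) ` Pow ({1..n} - image_cols)"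
    by (intro Min_in) auto
  moreover have "Min ((\<lambda>C. P (X \<union> C)) ` Pow ({1..n} - image_cols)) = restr_min X"
    unfolding restr_min_def by (intro Min_Inf) auto
  ultimately show ?thesis by auto
qed

lemma affine_induced_eq_if:
  "affine_induced val n M P B =
     (if B \<subseteq> {0..n} \<and> card B = affine_rank val n M P
        \<and> card ((\<lambda>i. if i \<in> support_rows then col i else 0) ` B) = affine_rank val n M P
      then restrict_vm {0..n} (pointed P) (insert 0 image_cols)
          ((\<lambda>i. if i \<in> support_rows then col i else 0) ` B) + (\<Sum>i\<in>B. wt i)
      else \<infinity>)"
  unfolding affine_induced_def Let_def col_image_assoc_map col_image_assoc_map_all[symmetric]
  by (simp add: assoc_map_eq)

lemma affine_induced_finite:
  assumes "affine_induced val n M P B \<noteq> \<infinity>"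
  shows "B \<subseteq> support_rows" and "inj_on col B" and "card B = affine_rank val n M P"
proof -
  let ?f = "\<lambda>i. if i \<in> support_rows then col i else 0"
  have B: "B \<subseteq> {0..n}" "card B = affine_rank val n M P" "card (?f ` B) = card B"
    and "(\<Sum>i\<in>B. wt i) \<noteq> \<infinity>"
    using assms unfolding affine_induced_eq_if by (auto split: if_splits)
  then show "card B = affine_rank val n M P" by simp
  have "finite B" using B(1) finite_subset by blast
  with \<open>(\<Sum>i\<in>B. wt i) \<noteq> \<infinity>\<close> have "wt i \<noteq> \<infinity>" if "i \<in> B" for i
    using that sum_Pinfty[of wt B] by blast
  then show "B \<subseteq> support_rows" using wt_finite_iff by blast
  then have "?f ` B = col ` B" by auto
  with B(3) \<open>finite B\<close> show "inj_on col B" using eq_card_imp_inj_on by metis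
qed

lemma affine_induced_eq:
  assumes "B \<subseteq> support_rows" and "inj_on col B" and "card B = affine_rank val n M P"
  shows "affine_induced val n M P B = restr_min (col ` B) + (\<Sum>i\<in>B. wt i)"
proof -
  have f: "(\<lambda>i. if i \<in> support_rows then col i else 0) ` B = col ` B" using assms(1) by auto
  have card: "card (col ` B) = affine_rank val n M P" using card_image[OF assms(2)] assms(3) by simp
  have sub: "col ` B \<subseteq> insert 0 image_cols" unfolding image_cols_def using assms(1) by blast
  have "restr_rank {0..n} (pointed P) (insert 0 image_cols) = affine_rank val n M P"
    unfolding affine_rank_def col_image_assoc_map_all ..
  moreover have "{0..n} - insert 0 image_cols = {1..n} - image_cols" by auto
  moreover have "(INF C\<in>Pow ({1..n} - image_cols). pointed P (col ` B \<union> C)) = restr_min (col ` B)"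
    unfolding restr_min_def
  proof (rule INF_cong)
    fix C assume "C \<in> Pow ({1..n} - image_cols)"
    moreover have "0 \<notin> col ` B" using col_spec(1) assms(1) by fastforce
    ultimately show "pointed P (col ` B \<union> C) = P (col ` B \<union> C)" unfolding pointed_def by auto
  qed simp
  ultimately have "restrict_vm {0..n} (pointed P) (insert 0 image_cols) (col ` B) = restr_min (col ` B)"
    unfolding restrict_vm_def using sub card by simp
  moreover have "B \<subseteq> {0..n}" using assms(1) support_rows_subset by auto
  ultimately show ?thesis
    unfolding affine_induced_eq_if f using assms(3) card by simp
qed

lemma affine_induced_insert:
  assumes "I \<subseteq> support_rows" and "inj_on col I" and "Suc (card I) = affine_rank val n M P"
    and "j \<in> support_rows" and "col j \<notin> col ` I"
  shows "affine_induced val n M P (insert j I)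
      = restr_min (insert (col j) (col ` I)) + wt j + (\<Sum>i\<in>I. wt i)"
proof -
  have "j \<notin> I" using assms(5) by blast
  have "finite I" using assms(1) support_rows_subset finite_subset[of I "{1..n}"] by blast
  have "affine_induced val n M P (insert j I) = restr_min (col ` insert j I) + (\<Sum>i\<in>insert j I. wt i)"
  proof (rule affine_induced_eq)
    show "insert j I \<subseteq> support_rows" "inj_on col (insert j I)"
      using assms(1,2,4,5) by auto
    show "card (insert j I) = affine_rank val n M P"
      using assms(3) \<open>j \<notin> I\<close> \<open>finite I\<close> by simp
  qed
  also have "\<dots> = restr_min (insert (col j) (col ` I)) + wt j + (\<Sum>i\<in>I. wt i)"
    using \<open>j \<notin> I\<close> \<open>finite I\<close> by (simp add: add.assoc)
  finally show ?thesis .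
qed

lemma affine_morphism_exchange:
  assumes morph: "affine_morphism val n M k Q P"
    and I: "I \<subseteq> support_rows" "inj_on col I" "Suc (card I) = affine_rank val n M P"
    and i: "i \<in> support_rows" "col i \<notin> col ` I"
    and J: "J \<subseteq> {1..n}" "card J = k" "i \<notin> J"
    and finite: "restr_min (insert (col i) (col ` I)) + wt i + Q J \<noteq> \<infinity>"
  obtains j where "j \<in> J" "j \<in> support_rows" "col j \<notin> col ` I"
    and "restr_min (insert (col j) (col ` I)) + wt j + Q (insert i (J - {j}))
      \<le> restr_min (insert (col i) (col ` I)) + wt i + Q J"
proof -
  let ?G = "affine_induced val n M P"
  define \<sigma> where "\<sigma> = (\<Sum>i\<in>I. wt i)"
  have "\<bar>\<sigma>\<bar> \<noteq> \<infinity>" unfolding \<sigma>_def using sum_wt_finite[OF I(1)] .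
  have "i \<notin> I" using i(2) by blast
  have "finite I" using I(1) support_rows_subset finite_subset[of I "{1..n}"] by blast
  have "insert i I \<subseteq> {0..n}" "card (insert i I) = affine_rank val n M P" "J \<subseteq> {0..n}"
    "i \<in> insert i I - J"
    using I(1,3) i(1) J(1,3) support_rows_subset \<open>i \<notin> I\<close> \<open>finite I\<close> by auto
  with morph J(2) obtain j where "j \<in> J - insert i I" and exch:
    "?G (insert j (insert i I - {i})) + pointed Q (insert i (J - {j})) \<le> ?G (insert i I) + pointed Q J"
    unfolding affine_morphism_def vm_quotient_def by blast
  have "insert i I - {i} = I" using \<open>i \<notin> I\<close> by blast
  moreover have "pointed Q J = Q J" "pointed Q (insert i (J - {j})) = Q (insert i (J - {j}))"
    using J(1) i(1) support_rows_subset unfolding pointed_def by auto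
  moreover have GI: "?G (insert i I) = restr_min (insert (col i) (col ` I)) + wt i + \<sigma>"
    unfolding \<sigma>_def using affine_induced_insert[OF I i] .
  ultimately have exch': "?G (insert j I) + Q (insert i (J - {j}))
      \<le> restr_min (insert (col i) (col ` I)) + wt i + \<sigma> + Q J"
    using exch by simp
  also have "\<dots> = (restr_min (insert (col i) (col ` I)) + wt i + Q J) + \<sigma>"
    by (simp add: ac_simps)
  finally have "?G (insert j I) \<noteq> \<infinity>"
    using finite \<open>\<bar>\<sigma>\<bar> \<noteq> \<infinity>\<close> by (auto simp: top_unique)
  then have "insert j I \<subseteq> support_rows" "inj_on col (insert j I)"
    using affine_induced_finite by blast+
  moreover have "j \<notin> I" using \<open>j \<in> J - insert i I\<close> by blast
  ultimately have "j \<in> support_rows" "col j \<notin> col ` I" by auto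
  then have "?G (insert j I) = restr_min (insert (col j) (col ` I)) + wt j + \<sigma>"
    unfolding \<sigma>_def using affine_induced_insert[OF I] by blast
  with exch' have "(restr_min (insert (col j) (col ` I)) + wt j + Q (insert i (J - {j}))) + \<sigma>
      \<le> (restr_min (insert (col i) (col ` I)) + wt i + Q J) + \<sigma>"
    by (simp add: ac_simps)
  then have "restr_min (insert (col j) (col ` I)) + wt j + Q (insert i (J - {j}))
      \<le> restr_min (insert (col i) (col ` I)) + wt i + Q J"
    using \<open>\<bar>\<sigma>\<bar> \<noteq> \<infinity>\<close> by (auto simp: ereal_add_le_add_iff2)
  with that \<open>j \<in> J - insert i I\<close> \<open>j \<in> support_rows\<close> \<open>col j \<notin> col ` I\<close> show ?thesis by blast
qed

lemma trop_space_adapted_restricted_basis: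
  assumes x: "x \<in> trop_space {1..n} r P" and "i0 \<in> support_rows" and "x (col i0) \<noteq> \<infinity>"
  obtains I B where "I \<subseteq> support_rows" "inj_on col I" "Suc (card I) = affine_rank val n M P"
    and "col i0 \<notin> col ` I" and "P B \<noteq> \<infinity>" and "restr_min (insert (col i0) (col ` I)) \<le> P B"
    and "\<And>j. j \<in> support_rows \<Longrightarrow> col j \<notin> col ` I \<Longrightarrow>
      x (col j) + P B \<le> x (col i0) + restr_min (insert (col j) (col ` I))"
proof -
  define d0 where "d0 = col i0"
  have "d0 \<in> image_cols" unfolding d0_def image_cols_def using assms(2) by blast
  have "x d0 \<noteq> \<infinity>" unfolding d0_def by fact
  have point: "trop_point_on {1..n} r P x image_cols"
    using vm_source x image_cols_subset by (rule trop_point_on.intro)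
  obtain B where "P B \<noteq> \<infinity>" "d0 \<in> B" and card_B: "card (B \<inter> image_cols) = restr_rank {1..n} P image_cols"
    and B_opt: "\<And>d C. d \<in> image_cols \<Longrightarrow> d \<notin> B \<inter> image_cols - {d0} \<Longrightarrow> C \<inter> image_cols = {} \<Longrightarrow>
      x d + P B \<le> x d0 + P (insert d (B \<inter> image_cols - {d0}) \<union> C)"
    using trop_point_on.optimal_basis[OF point \<open>d0 \<in> image_cols\<close> \<open>x d0 \<noteq> \<infinity>\<close>] by blast
  define D where "D = B \<inter> image_cols - {d0}"
  have "finite B" using valuated_matroid_basis_finite[OF vm_source \<open>P B \<noteq> \<infinity>\<close>] .
  have "D \<subseteq> col ` support_rows" unfolding D_def image_cols_def by blast
  then obtain I where I: "I \<subseteq> support_rows" "inj_on col I" "col ` I = D"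
    unfolding subset_image_inj by metis
  have "Suc (card D) = affine_rank val n M P"
    using card_B \<open>finite B\<close> \<open>d0 \<in> B\<close> \<open>d0 \<in> image_cols\<close> card_Suc_Diff1[of "B \<inter> image_cols" d0]
    unfolding D_def affine_rank_eq by simp
  then have card_I: "Suc (card I) = affine_rank val n M P"
    using card_image[OF I(2)] I(3) by simp
  have "col i0 \<notin> col ` I" unfolding I(3) D_def d0_def by blast
  have "B \<subseteq> {1..n}" using valuated_matroid_support(1)[OF vm_source \<open>P B \<noteq> \<infinity>\<close>] .
  then have "restr_min (insert d0 D) \<le> P (insert d0 D \<union> (B - image_cols))"
    by (intro restr_min_le) auto
  also have "insert d0 D \<union> (B - image_cols) = B"
    using \<open>d0 \<in> B\<close> unfolding D_def by blast
  finally have restr_B: "restr_min (insert (col i0) (col ` I)) \<le> P B"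
    unfolding I(3) d0_def .
  have "x (col j) + P B \<le> x (col i0) + restr_min (insert (col j) (col ` I))"
    if "j \<in> support_rows" "col j \<notin> col ` I" for j
  proof -
    obtain C where "C \<inter> image_cols = {}" and C: "restr_min (insert (col j) D) = P (insert (col j) D \<union> C)"
      using restr_min_attained by blast
    have "col j \<in> image_cols" unfolding image_cols_def using that(1) by blast
    then have "x (col j) + P B \<le> x d0 + P (insert (col j) D \<union> C)"
      using that(2) \<open>C \<inter> image_cols = {}\<close> unfolding I(3) D_def by (rule B_opt)
    then show ?thesis unfolding C[symmetric] I(3) d0_def .
  qed
  with I(1,2) card_I \<open>col i0 \<notin> col ` I\<close> \<open>P B \<noteq> \<infinity>\<close> restr_B show ?thesis by (rule that)
qed

lemma maps_trop_space_if_affine_morphism: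
  assumes morph: "affine_morphism val n M k Q P" and x: "x \<in> trop_space {1..n} r P"
    and "\<exists>i. trop_mat_vec val n M x i \<noteq> \<infinity>"
  shows "trop_mat_vec val n M x \<in> trop_space {1..n} k Q"
proof (rule trop_mat_vec_in_trop_spaceI[OF x assms(3)])
  fix K i0 assume K: "K \<subseteq> {1..n}" "card K = Suc k" "i0 \<in> K"
    and finite: "Q (K - {i0}) + (wt i0 + x (col i0)) \<noteq> \<infinity>"
  then have "i0 \<in> support_rows" "x (col i0) \<noteq> \<infinity>"
    using wt_finite_iff by auto
  then obtain I B where I: "I \<subseteq> support_rows" "inj_on col I" "Suc (card I) = affine_rank val n M P"
    "col i0 \<notin> col ` I" and "P B \<noteq> \<infinity>" and restr_B: "restr_min (insert (col i0) (col ` I)) \<le> P B"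
    and opt: "\<And>j. j \<in> support_rows \<Longrightarrow> col j \<notin> col ` I \<Longrightarrow>
      x (col j) + P B \<le> x (col i0) + restr_min (insert (col j) (col ` I))"
    using trop_space_adapted_restricted_basis[OF x] by blast
  define J where "J = K - {i0}"
  have J: "J \<subseteq> {1..n}" "card J = k" "i0 \<notin> J" unfolding J_def using K by auto
  have "restr_min (insert (col i0) (col ` I)) + wt i0 + Q J \<le> P B + wt i0 + Q J"
    using restr_B by (intro add_right_mono)
  moreover have "P B + wt i0 + Q J \<noteq> \<infinity>"
    using \<open>P B \<noteq> \<infinity>\<close> finite unfolding J_def by simp
  ultimately have "restr_min (insert (col i0) (col ` I)) + wt i0 + Q J \<noteq> \<infinity>"
    by (auto simp: top_unique)
  then obtain j where "j \<in> J" "j \<in> support_rows" "col j \<notin> col ` I"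
    and exch: "restr_min (insert (col j) (col ` I)) + wt j + Q (insert i0 (J - {j}))
      \<le> restr_min (insert (col i0) (col ` I)) + wt i0 + Q J"
    using affine_morphism_exchange[OF morph I(1-3) \<open>i0 \<in> support_rows\<close> I(4) J] by blast
  have "insert i0 (J - {j}) = K - {j}" using K(3) \<open>j \<in> J\<close> unfolding J_def by auto
  have "(Q (K - {j}) + (wt j + x (col j))) + P B = (wt j + Q (K - {j})) + (x (col j) + P B)"
    by (simp add: ac_simps)
  also have "\<dots> \<le> (wt j + Q (K - {j})) + (x (col i0) + restr_min (insert (col j) (col ` I)))"
    using opt[OF \<open>j \<in> support_rows\<close> \<open>col j \<notin> col ` I\<close>] by (rule add_left_mono)
  also have "\<dots> = (restr_min (insert (col j) (col ` I)) + wt j + Q (insert i0 (J - {j}))) + x (col i0)"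
    unfolding \<open>insert i0 (J - {j}) = K - {j}\<close> by (simp add: ac_simps)
  also have "\<dots> \<le> (restr_min (insert (col i0) (col ` I)) + wt i0 + Q J) + x (col i0)"
    using exch by (rule add_right_mono)
  also have "\<dots> \<le> (P B + wt i0 + Q J) + x (col i0)"
    using restr_B by (intro add_right_mono)
  also have "\<dots> = (Q (K - {i0}) + (wt i0 + x (col i0))) + P B"
    unfolding J_def by (simp add: ac_simps)
  finally have "Q (K - {j}) + (wt j + x (col j)) \<le> Q (K - {i0}) + (wt i0 + x (col i0))"
    using \<open>P B \<noteq> \<infinity>\<close> valuated_matroid_not_MInfty[OF vm_source] by (simp add: ereal_add_le_add_iff2)
  moreover have "j \<in> K" "j \<noteq> i0" using \<open>j \<in> J\<close> unfolding J_def by auto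
  ultimately show "\<exists>b\<in>K. b \<noteq> i0 \<and>
      Q (K - {b}) + (wt b + x (col b)) \<le> Q (K - {i0}) + (wt i0 + x (col i0))" by blast
qed

lemma arrow_relations_basis_exchange:
  assumes rel: "arrow_relations val n M r k P Q" and "P B \<noteq> \<infinity>" and "Q J \<noteq> \<infinity>"
    and "i \<in> support_rows" and "col i \<in> B" and "i \<notin> J"
  obtains b where "b \<in> J" "b \<in> support_rows" "col b \<notin> B - {col i}"
    and "P (insert (col b) (B - {col i})) \<noteq> \<infinity>"
proof -
  define I where "I = B - {col i}"
  define J' where "J' = insert i J"
  have "B \<subseteq> {1..n}" "card B = r" "finite B"
    using valuated_matroid_support[OF vm_source \<open>P B \<noteq> \<infinity>\<close>]
      valuated_matroid_basis_finite[OF vm_source \<open>P B \<noteq> \<infinity>\<close>] by auto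
  then have I: "I \<subseteq> {1..n}" "card I = r - 1" "insert (col i) I = B"
    unfolding I_def using \<open>col i \<in> B\<close> by auto
  have "J \<subseteq> {1..n}" "card J = k" "finite J"
    using valuated_matroid_support[OF vm_target \<open>Q J \<noteq> \<infinity>\<close>]
      valuated_matroid_basis_finite[OF vm_target \<open>Q J \<noteq> \<infinity>\<close>] by auto
  then have J': "J' \<subseteq> {1..n}" "card J' = k + 1" "J' - {i} = J" "i \<in> J'"
    unfolding J'_def using \<open>i \<notin> J\<close> \<open>i \<in> support_rows\<close> support_rows_subset by auto
  have "relation_term I J' i = wt i + P B + Q J"
    unfolding relation_term_def I(3) J'(3) ..
  then have "relation_term I J' i \<noteq> \<infinity>"
    using \<open>i \<in> support_rows\<close> wt_finite_iff \<open>P B \<noteq> \<infinity>\<close> \<open>Q J \<noteq> \<infinity>\<close> by simp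
  then obtain b where "b \<in> J'" "b \<noteq> i" "relation_term I J' b \<le> relation_term I J' i"
    using arrow_relationsD[OF rel I(1,2) J'(1,2,4)] by blast
  then have "relation_term I J' b \<noteq> \<infinity>"
    using \<open>relation_term I J' i \<noteq> \<infinity>\<close> by (auto simp: top_unique)
  then have "b \<in> support_rows" "col b \<notin> I" "P (insert (col b) I) \<noteq> \<infinity>"
    using relation_term_finite[OF _ I(1,2)] by auto
  moreover have "b \<in> J" using \<open>b \<in> J'\<close> \<open>b \<noteq> i\<close> unfolding J'_def by blast
  ultimately show ?thesis using that unfolding I_def by blast
qed

text \<open>If a basis of \<open>P\<close> met the image columns in more than \<open>k\<close> elements, a basis maximising its
  meeting with the columns of a basis of \<open>Q\<close> could be improved by the exchange above.\<close>

lemma affine_rank_le_if_arrow_relations: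
  assumes rel: "arrow_relations val n M r k P Q"
  shows "affine_rank val n M P \<le> k"
proof (rule ccontr)
  assume "\<not> affine_rank val n M P \<le> k"
  then have rank_gt: "k < restr_rank {1..n} P image_cols" unfolding affine_rank_eq by simp
  obtain J where "Q J \<noteq> \<infinity>" using valuated_matroid_ex_basis[OF vm_target] by blast
  have "card J = k" "finite J"
    using valuated_matroid_support(2)[OF vm_target \<open>Q J \<noteq> \<infinity>\<close>]
      valuated_matroid_basis_finite[OF vm_target \<open>Q J \<noteq> \<infinity>\<close>] by auto
  define X where "X = col ` (J \<inter> support_rows)"
  have "finite X" "card X \<le> k"
    unfolding X_def using \<open>finite J\<close> \<open>card J = k\<close>
    by (auto intro: card_image_le[THEN order.trans] card_mono)
  let ?max = "\<lambda>B. P B \<noteq> \<infinity> \<and> card (B \<inter> image_cols) = restr_rank {1..n} P image_cols"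
  obtain B0 where "?max B0" using restr_rank_attained(1)[OF vm_source] by blast
  moreover have "\<forall>B. ?max B \<longrightarrow> card (B \<inter> X) < Suc (card X)"
    using \<open>finite X\<close> by (simp add: card_mono le_imp_less_Suc)
  ultimately obtain B where "P B \<noteq> \<infinity>" and card_B: "card (B \<inter> image_cols) = restr_rank {1..n} P image_cols"
    and B_max: "\<And>B'. ?max B' \<Longrightarrow> card (B' \<inter> X) \<le> card (B \<inter> X)"
    using ex_has_greatest_nat[of ?max B0 "\<lambda>B. card (B \<inter> X)"] by blast
  have "finite B" using valuated_matroid_basis_finite[OF vm_source \<open>P B \<noteq> \<infinity>\<close>] .
  have "\<not> B \<inter> image_cols \<subseteq> X"
  proof
    assume "B \<inter> image_cols \<subseteq> X"
    then have "card (B \<inter> image_cols) \<le> card X" using \<open>finite X\<close> by (rule card_mono[rotated])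
    with card_B rank_gt \<open>card X \<le> k\<close> show False by simp
  qed
  then obtain i where "i \<in> support_rows" "col i \<in> B" "col i \<notin> X"
    unfolding image_cols_def by blast
  moreover from this have "i \<notin> J" unfolding X_def by blast
  ultimately obtain b where "b \<in> J" "b \<in> support_rows" "col b \<notin> B - {col i}"
    and "P (insert (col b) (B - {col i})) \<noteq> \<infinity>"
    using arrow_relations_basis_exchange[OF rel \<open>P B \<noteq> \<infinity>\<close> \<open>Q J \<noteq> \<infinity>\<close>] by blast
  then have "col b \<in> X" "col b \<in> image_cols" unfolding X_def image_cols_def by auto
  with \<open>col i \<notin> X\<close> \<open>col b \<notin> B - {col i}\<close> have "col b \<notin> B" by auto
  define B' where "B' = insert (col b) (B - {col i})"
  have "B' \<inter> image_cols = insert (col b) (B \<inter> image_cols - {col i})"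
    using \<open>col b \<in> image_cols\<close> unfolding B'_def by blast
  then have "card (B' \<inter> image_cols) = card (B \<inter> image_cols)"
    using \<open>finite B\<close> \<open>col b \<notin> B\<close> \<open>col i \<in> B\<close> \<open>i \<in> support_rows\<close>
      card_Suc_Diff1[of "B \<inter> image_cols" "col i"] unfolding image_cols_def by simp
  moreover have "B' \<inter> X = insert (col b) (B \<inter> X)"
    using \<open>col b \<in> X\<close> \<open>col i \<notin> X\<close> unfolding B'_def by blast
  then have "card (B' \<inter> X) = Suc (card (B \<inter> X))"
    using \<open>finite B\<close> \<open>col b \<notin> B\<close> by simp
  moreover have "P B' \<noteq> \<infinity>" unfolding B'_def by fact
  ultimately show False using B_max[of B'] card_B by simp
qed

lemma arrow_relations_exchange:
  assumes rel: "arrow_relations val n M r k P Q"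
    and I: "inj_on col (insert i I)" "I \<subseteq> support_rows" "i \<in> support_rows" "i \<notin> I"
    and J: "J \<subseteq> {1..n}" "card J = k" "i \<notin> J"
    and finite: "restr_min (insert (col i) (col ` I)) + wt i + Q J \<noteq> \<infinity>"
  obtains j where "j \<in> J" "j \<in> support_rows" "col j \<notin> col ` I"
    and "restr_min (insert (col j) (col ` I)) + wt j + Q (insert i (J - {j}))
      \<le> restr_min (insert (col i) (col ` I)) + wt i + Q J"
proof -
  obtain C where "C \<subseteq> {1..n}" "C \<inter> image_cols = {}"
    and C: "restr_min (insert (col i) (col ` I)) = P (insert (col i) (col ` I) \<union> C)"
    using restr_min_attained by blast
  define I' where "I' = col ` I \<union> C"
  have "col i \<notin> I'"
    using I \<open>C \<inter> image_cols = {}\<close> unfolding I'_def image_cols_def by auto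
  have basis: "P (insert (col i) I') \<noteq> \<infinity>"
    using finite C unfolding I'_def by auto
  have "insert (col i) I' \<subseteq> {1..n}" "card (insert (col i) I') = r" "finite (insert (col i) I')"
    using valuated_matroid_support[OF vm_source basis] valuated_matroid_basis_finite[OF vm_source basis]
    by blast+
  then have I': "I' \<subseteq> {1..n}" "card I' = r - 1"
    using \<open>col i \<notin> I'\<close> by auto
  define J' where "J' = insert i J"
  have J': "J' \<subseteq> {1..n}" "card J' = k + 1" "J' - {i} = J"
    unfolding J'_def using J I(3) support_rows_subset finite_subset[OF J(1)] by auto
  have term_i: "relation_term I' J' i = restr_min (insert (col i) (col ` I)) + wt i + Q J"
    unfolding relation_term_def J'(3) C I'_def by (simp add: ac_simps)
  have "i \<in> J'" unfolding J'_def by simp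
  have "relation_term I' J' i \<noteq> \<infinity>" using finite term_i by simp
  then obtain j where "j \<in> J'" "j \<noteq> i" and j_le: "relation_term I' J' j \<le> relation_term I' J' i"
    using arrow_relationsD[OF rel I' J'(1,2) \<open>i \<in> J'\<close>] by blast
  then have "relation_term I' J' j \<noteq> \<infinity>"
    using \<open>relation_term I' J' i \<noteq> \<infinity>\<close> by (auto simp: top_unique)
  then have "j \<in> support_rows" "col j \<notin> I'" using relation_term_finite[OF _ I'] by auto
  then have "col j \<notin> col ` I" unfolding I'_def by blast
  have "j \<in> J" using \<open>j \<in> J'\<close> \<open>j \<noteq> i\<close> unfolding J'_def by blast
  have "J' - {j} = insert i (J - {j})" unfolding J'_def using \<open>j \<noteq> i\<close> by auto
  then have term_j: "relation_term I' J' j = P (insert (col j) (col ` I) \<union> C) + wt j + Q (insert i (J - {j}))"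
    unfolding relation_term_def I'_def by (simp add: ac_simps)
  have "restr_min (insert (col j) (col ` I)) \<le> P (insert (col j) (col ` I) \<union> C)"
    using \<open>C \<subseteq> {1..n}\<close> \<open>C \<inter> image_cols = {}\<close> by (rule restr_min_le)
  then have "restr_min (insert (col j) (col ` I)) + wt j + Q (insert i (J - {j})) \<le> relation_term I' J' j"
    unfolding term_j by (intro add_right_mono)
  also note j_le
  finally show ?thesis
    unfolding term_i by (rule that[OF \<open>j \<in> J\<close> \<open>j \<in> support_rows\<close> \<open>col j \<notin> col ` I\<close>])
qed

lemma affine_induced_finite_remove:
  assumes "affine_induced val n M P I \<noteq> \<infinity>" and "i \<in> I"
  shows "I - {i} \<subseteq> support_rows" "inj_on col (I - {i})"
    "Suc (card (I - {i})) = affine_rank val n M P" "i \<in> support_rows" "col i \<notin> col ` (I - {i})"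
proof -
  note I = affine_induced_finite[OF assms(1)]
  have "finite I" using I(1) support_rows_subset finite_subset[of I "{1..n}"] by blast
  show "Suc (card (I - {i})) = affine_rank val n M P"
    using card_Suc_Diff1[OF \<open>finite I\<close> assms(2)] I(3) by simp
  show "I - {i} \<subseteq> support_rows" "inj_on col (I - {i})" "i \<in> support_rows" "col i \<notin> col ` (I - {i})"
    using I(1,2) assms(2) by (auto intro: inj_on_subset simp: inj_on_def)
qed

lemma affine_induced_exchange_if_arrow_relations:
  assumes rel: "arrow_relations val n M r k P Q"
    and "affine_induced val n M P I \<noteq> \<infinity>" and "Q J \<noteq> \<infinity>" and "i \<in> I" and "i \<notin> J"
  obtains j where "j \<in> J - I"
    and "affine_induced val n M P (insert j (I - {i})) + Q (insert i (J - {j}))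
      \<le> affine_induced val n M P I + Q J"
proof -
  let ?G = "affine_induced val n M P"
  define I2 where "I2 = I - {i}"
  define \<sigma> where "\<sigma> = (\<Sum>i\<in>I2. wt i)"
  note I2 = affine_induced_finite_remove[OF assms(2,4), folded I2_def]
  have "insert i I2 = I" "i \<notin> I2" unfolding I2_def using \<open>i \<in> I\<close> by auto
  have "J \<subseteq> {1..n}" "card J = k"
    using valuated_matroid_support[OF vm_target \<open>Q J \<noteq> \<infinity>\<close>] by auto
  have GI: "?G I = restr_min (insert (col i) (col ` I2)) + wt i + \<sigma>"
    unfolding \<sigma>_def using affine_induced_insert[OF I2] \<open>insert i I2 = I\<close> by simp
  have "\<bar>\<sigma>\<bar> \<noteq> \<infinity>" unfolding \<sigma>_def using sum_wt_finite[OF I2(1)] .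
  then have "restr_min (insert (col i) (col ` I2)) + wt i + Q J \<noteq> \<infinity>"
    using \<open>?G I \<noteq> \<infinity>\<close> \<open>Q J \<noteq> \<infinity>\<close> unfolding GI by simp
  moreover have "inj_on col (insert i I2)"
    using affine_induced_finite(2)[OF assms(2)] \<open>insert i I2 = I\<close> by simp
  ultimately obtain j where "j \<in> J" "j \<in> support_rows" "col j \<notin> col ` I2"
    and exch: "restr_min (insert (col j) (col ` I2)) + wt j + Q (insert i (J - {j}))
      \<le> restr_min (insert (col i) (col ` I2)) + wt i + Q J"
    using arrow_relations_exchange[OF rel _ I2(1,4) \<open>i \<notin> I2\<close> \<open>J \<subseteq> {1..n}\<close> \<open>card J = k\<close> \<open>i \<notin> J\<close>]
    by blast
  have "j \<notin> I" using \<open>col j \<notin> col ` I2\<close> \<open>j \<in> J\<close> \<open>i \<notin> J\<close> unfolding I2_def by auto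
  have "?G (insert j I2) + Q (insert i (J - {j}))
      = (restr_min (insert (col j) (col ` I2)) + wt j + Q (insert i (J - {j}))) + \<sigma>"
    unfolding \<sigma>_def affine_induced_insert[OF I2(1-3) \<open>j \<in> support_rows\<close> \<open>col j \<notin> col ` I2\<close>]
    by (simp add: ac_simps)
  also have "\<dots> \<le> (restr_min (insert (col i) (col ` I2)) + wt i + Q J) + \<sigma>"
    using exch by (rule add_right_mono)
  also have "\<dots> = ?G I + Q J"
    unfolding GI by (simp add: ac_simps)
  finally show ?thesis using that \<open>j \<in> J\<close> \<open>j \<notin> I\<close> unfolding I2_def by blast
qed

lemma affine_morphism_if_arrow_relations:
  assumes rel: "arrow_relations val n M r k P Q"
  shows "affine_morphism val n M k Q P"
  unfolding affine_morphism_def vm_quotient_def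
proof (intro conjI allI impI)
  show rank: "affine_rank val n M P \<le> k" using affine_rank_le_if_arrow_relations[OF rel] .
  let ?G = "affine_induced val n M P"
  fix I J i assume "I \<subseteq> {0..n} \<and> card I = affine_rank val n M P \<and> J \<subseteq> {0..n} \<and> card J = k \<and> i \<in> I - J"
  then have I: "I \<subseteq> {0..n}" "card I = affine_rank val n M P" and "card J = k"
    and "i \<in> I" "i \<notin> J" by auto
  show "\<exists>j\<in>J - I. ?G (insert j (I - {i})) + pointed Q (insert i (J - {j})) \<le> ?G I + pointed Q J"
  proof (cases "?G I + pointed Q J = \<infinity>")
    case True
    have "finite I" using I(1) finite_subset by auto
    have "\<not> J \<subseteq> I - {i}"
    proof
      assume "J \<subseteq> I - {i}"
      then have "card J \<le> card (I - {i})" using \<open>finite I\<close> by (intro card_mono) auto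
      moreover have "0 < card I" using \<open>i \<in> I\<close> \<open>finite I\<close> card_gt_0_iff by blast
      ultimately show False
        using I(2) \<open>card J = k\<close> rank \<open>i \<in> I\<close> \<open>finite I\<close> by (simp add: card_Diff_singleton)
    qed
    then obtain j where "j \<in> J - I" using \<open>i \<notin> J\<close> by blast
    with True show ?thesis by auto
  next
    case False
    then have "?G I \<noteq> \<infinity>" "0 \<notin> J" "Q J \<noteq> \<infinity>"
      unfolding pointed_def by (auto split: if_splits)
    then obtain j where "j \<in> J - I"
      and exch: "?G (insert j (I - {i})) + Q (insert i (J - {j})) \<le> ?G I + Q J"
      using affine_induced_exchange_if_arrow_relations[OF rel _ _ \<open>i \<in> I\<close> \<open>i \<notin> J\<close>] by blast
    have "i \<noteq> 0"
      using affine_induced_finite(1)[OF \<open>?G I \<noteq> \<infinity>\<close>] \<open>i \<in> I\<close> support_rows_subset by auto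
    with \<open>0 \<notin> J\<close> have "pointed Q J = Q J" "pointed Q (insert i (J - {j})) = Q (insert i (J - {j}))"
      unfolding pointed_def by auto
    with exch have "?G (insert j (I - {i})) + pointed Q (insert i (J - {j})) \<le> ?G I + pointed Q J"
      by simp
    with \<open>j \<in> J - I\<close> show ?thesis by blast
  qed
qed

lemma arrow_relations_iff_maps_trop_space:
  "arrow_relations val n M r k P Q \<longleftrightarrow>
     (\<forall>x\<in>trop_space {1..n} r P. (\<exists>i. trop_mat_vec val n M x i \<noteq> \<infinity>) \<longrightarrow>
        trop_mat_vec val n M x \<in> trop_space {1..n} k Q)"
  using maps_trop_space_if_arrow_relations arrow_relations_if_maps_trop_space by blast

lemma arrow_relations_iff_affine_morphism:
  "arrow_relations val n M r k P Q \<longleftrightarrow> affine_morphism val n M k Q P"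
  using affine_morphism_if_arrow_relations maps_trop_space_if_affine_morphism
    arrow_relations_if_maps_trop_space by blast

end

theorem theoremB:
  fixes val :: "'k::field \<Rightarrow> ereal" and n :: nat
    and V :: "'v set" and Arr :: "'a set" and s t :: "'a \<Rightarrow> 'v"
    and A :: "'a \<Rightarrow> nat \<Rightarrow> nat \<Rightarrow> 'k" and d :: "'v \<Rightarrow> nat"
    and \<mu> :: "'v \<Rightarrow> nat set \<Rightarrow> ereal"
  assumes "valuation val" and "1 \<le> n"
    and "finite V" and "finite Arr"
    and "\<forall>\<alpha>\<in>Arr. s \<alpha> \<in> V \<and> t \<alpha> \<in> V"
    and "\<forall>\<alpha>\<in>Arr. weakly_monomial n (A \<alpha>)"
    and "\<forall>i\<in>V. d i \<le> n"
    and "\<forall>i\<in>V. valuated_matroid {1..n} (d i) (\<mu> i)"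
  shows "(QDr val n V Arr s t A d \<mu> \<longleftrightarrow>
           (\<forall>\<alpha>\<in>Arr. \<forall>x\<in>trop_space {1..n} (d (s \<alpha>)) (\<mu> (s \<alpha>)).
              (\<exists>i. trop_mat_vec val n (A \<alpha>) x i \<noteq> \<infinity>) \<longrightarrow>
              trop_mat_vec val n (A \<alpha>) x \<in> trop_space {1..n} (d (t \<alpha>)) (\<mu> (t \<alpha>))))
       \<and> (QDr val n V Arr s t A d \<mu> \<longleftrightarrow>
           (\<forall>\<alpha>\<in>Arr. affine_morphism val n (A \<alpha>) (d (t \<alpha>)) (\<mu> (t \<alpha>)) (\<mu> (s \<alpha>))))"
proof -
  have arrow: "quiver_arrow val n (A \<alpha>) (d (s \<alpha>)) (d (t \<alpha>)) (\<mu> (s \<alpha>)) (\<mu> (t \<alpha>))"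
    if "\<alpha> \<in> Arr" for \<alpha>
    using assms that unfolding quiver_arrow_def quiver_arrow_axioms_def weakly_monomial_matrix_def
    by blast
  show ?thesis
    unfolding QDr_iff_arrow_relations[OF assms(8)]
    using quiver_arrow.arrow_relations_iff_maps_trop_space[OF arrow]
      quiver_arrow.arrow_relations_iff_affine_morphism[OF arrow]
    by (intro conjI ball_cong refl) simp_all
qed

end
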